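(* Let $\gamma_X=(X,d_X(\cdot))$ and $\gamma_Y=(Y,d_Y(\cdot))$ be any two dynamic metric spaces. For any $k\in\mathbf{Z}_+$, \[d_{\mathrm{I}}(\mathrm{rk}_k(\gamma_X),\mathrm{rk}_k(\gamma_Y))\le 2\cdot d_{\mathtt{dyn}}(\gamma_X,\gamma_Y).\]
   Context: A dynamic metric space (DMS) is a pair $\gamma_X=(X,d_X(\cdot))$ where $X$ is a nonempty finite set and $d_X(\cdot):\mathbf{R}\times X\times X\to\mathbf{R}_+$ satisfies: each $d_X(t)$ is a pseudometric, some $d_X(t_0)$ is a metric, and $t\mapsto d_X(t)(x,x')$ is continuous for all $x,x'$. For a closed interval $I$, $(\bigvee_I d_X)(x,x'):=\min_{s\in I}d_X(s)(x,x')$; $[t]^\varepsilon=[t-\varepsilon,t+\varepsilon]$. A tripod between $X$ and $Y$ is a set $Z$ with surjections $\varphi_X:Z\to X$, $\varphi_Y:Z\to Y$; it is an $\varepsilon$-tripod between $\gamma_X,\gamma_Y$ if for all $t\in\mathbf{R}$, $z,z'\in Z$: $(\bigvee_{[t]^\varepsilon}d_X)(\varphi_X(z),\varphi_X(z'))\le d_Y(t)(\varphi_Y(z),\varphi_Y(z'))+2\varepsilon$ and $(\bigvee_{[t]^\varepsilon}d_Y)(\varphi_Y(z),\varphi_Y(z'))\le d_X(t)(\varphi_X(z),\varphi_X(z'))+2\varepsilon$. $d_{\mathtt{dyn}}(\gamma_X,\gamma_Y)$ is the minimum over tripods of the infimum of $\varepsilon$ for which the tripod is an $\varepsilon$-tripod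 ($\infty$ if none). For symmetric $d$ vanishing on the diagonal, $\mathcal{R}_\delta(X,d)$ is the simplicial complex on $X$ with simplices the nonempty $\sigma$ with $d(x,x')\le\delta$ for all $x,x'\in\sigma$; $\mathrm{H}_k$ is simplicial homology over a fixed field. $\mathbf{R}^6_\times$ is $\mathbf{R}^6$ with $\mathbf{a}\le\mathbf{b}$ iff $a_1\le b_1$, $a_2\ge b_2$, $a_3\ge b_3$, $a_4\ge b_4$, $a_5\le b_5$, $a_6\le b_6$. $\mathbf{a}$ is admissible if $a_1\le a_2$, $a_4\le a_5$, $a_3,a_6\ge0$, $[a_1,a_2]\subseteq[a_4,a_5]$, $a_3\le a_6$; trivially non-admissible if no admissible $\mathbf{b}<\mathbf{a}$ in $\mathbf{R}^6_\times$ exists. $\mathrm{rk}_k(\gamma_X):\mathbf{R}^6\to\mathbf{Z}_+\cup\{\infty\}$ is the rank of $\mathrm{H}_k(\mathcal{R}_{a_3}(X,\bigvee_{[a_1,a_2]}d_X)\hookrightarrow\mathcal{R}_{a_6}(X,\bigvee_{[a_4,a_5]}d_X))$ for admissible $\mathbf{a}$, $\infty$ for trivially non-admissible $\mathbf{a}$, and $0$ otherwise; it is order-reversing on $\mathbf{R}^6_\times$. For order-reversing $F,G:\mathbf{R}^6_\times\to\mathbf{Z}_+\cup\{\infty\}$ and $\varepsilon\ge0$, let $\mathbf{a}+\vec\varepsilon:=(a_1+\varepsilon,a_2-\varepsilon,a_3-\varepsilon,a_4-\varepsilon,a_5+\varepsilon,a_6+\varepsilon)$ (the shift upward by $\varepsilon$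 in every coordinate of $\mathbf{R}^6_\times$). Then $d_{\mathrm{I}}(F,G):=\inf\{\varepsilon\ge0:\forall\mathbf{a},\ F(\mathbf{a})\ge G(\mathbf{a}+\vec\varepsilon)\text{ and }G(\mathbf{a})\ge F(\mathbf{a}+\vec\varepsilon)\}$. *)

theory Defs
  imports "HOL-Analysis.Analysis" "HOL-Library.Function_Algebras" "HOL-Library.Extended_Nat"
begin

definition is_pseudometric_on :: "'a set \<Rightarrow> ('a \<Rightarrow> 'a \<Rightarrow> real) \<Rightarrow> bool" where
  "is_pseudometric_on X d \<longleftrightarrow>
     (\<forall>x\<in>X. \<forall>y\<in>X. d x y \<ge> 0) \<and> (\<forall>x\<in>X. d x x = 0) \<and>
     (\<forall>x\<in>X. \<forall>y\<in>X. d x y = d y x) \<and>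
     (\<forall>x\<in>X. \<forall>y\<in>X. \<forall>z\<in>X. d x z \<le> d x y + d y z)"

definition is_metric_on :: "'a set \<Rightarrow> ('a \<Rightarrow> 'a \<Rightarrow> real) \<Rightarrow> bool" where
  "is_metric_on X d \<longleftrightarrow> is_pseudometric_on X d \<and> (\<forall>x\<in>X. \<forall>y\<in>X. d x y = 0 \<longrightarrow> x = y)"

definition is_DMS :: "'a set \<Rightarrow> (real \<Rightarrow> 'a \<Rightarrow> 'a \<Rightarrow> real) \<Rightarrow> bool" where
  "is_DMS X d \<longleftrightarrow> finite X \<and> X \<noteq> {} \<and>
     (\<forall>t. is_pseudometric_on X (d t)) \<and>
     (\<exists>t0. is_metric_on X (d t0)) \<and>
     (\<forall>x\<in>X. \<forall>y\<in>X. continuous_on UNIV (\<lambda>t. d t x y))"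

definition vee :: "(real \<Rightarrow> 'a \<Rightarrow> 'a \<Rightarrow> real) \<Rightarrow> real \<Rightarrow> real \<Rightarrow> 'a \<Rightarrow> 'a \<Rightarrow> real" where
  "vee d a b x y = Inf ((\<lambda>s. d s x y) ` {a..b})"

definition eps_tripod ::
  "'a set \<Rightarrow> (real \<Rightarrow> 'a \<Rightarrow> 'a \<Rightarrow> real) \<Rightarrow> 'b set \<Rightarrow> (real \<Rightarrow> 'b \<Rightarrow> 'b \<Rightarrow> real)
    \<Rightarrow> 'z set \<Rightarrow> ('z \<Rightarrow> 'a) \<Rightarrow> ('z \<Rightarrow> 'b) \<Rightarrow> real \<Rightarrow> bool" where
  "eps_tripod X dX Y dY Z phiX phiY \<epsilon> \<longleftrightarrow>
     phiX ` Z = X \<and> phiY ` Z = Y \<and>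
     (\<forall>t. \<forall>z\<in>Z. \<forall>z'\<in>Z.
        vee dX (t - \<epsilon>) (t + \<epsilon>) (phiX z) (phiX z') \<le> dY t (phiY z) (phiY z') + 2 * \<epsilon> \<and>
        vee dY (t - \<epsilon>) (t + \<epsilon>) (phiY z) (phiY z') \<le> dX t (phiX z) (phiX z') + 2 * \<epsilon>)"

text \<open>Tripods are taken with Z a subset of X \<times> Y (every tripod between finite
  sets factors through its image in X \<times> Y, with the same \<epsilon>-tripod property).
  d_dyn is the infimum over all tripods and admissible \<epsilon>; \<infinity> if there are none.\<close>
definition d_dyn ::
  "'a set \<Rightarrow> (real \<Rightarrow> 'a \<Rightarrow> 'a \<Rightarrow> real) \<Rightarrow> 'b set \<Rightarrow> (real \<Rightarrow> 'b \<Rightarrow> 'b \<Rightarrow> real) \<Rightarrow> ereal" where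
  "d_dyn X dX Y dY = Inf {ereal \<epsilon> | \<epsilon> (Z :: ('a \<times> 'b) set) phiX phiY.
      \<epsilon> \<ge> 0 \<and> eps_tripod X dX Y dY Z phiX phiY \<epsilon>}"

definition rips :: "'a set \<Rightarrow> ('a \<Rightarrow> 'a \<Rightarrow> real) \<Rightarrow> real \<Rightarrow> 'a set set" where
  "rips X d \<delta> = {\<sigma>. \<sigma> \<noteq> {} \<and> \<sigma> \<subseteq> X \<and> (\<forall>x\<in>\<sigma>. \<forall>x'\<in>\<sigma>. d x x' \<le> \<delta>)}"

text \<open>Simplicial k-chains of a complex K with coefficients in a field 'f: functions on
  k-simplices (sets of card k+1, oriented by the linear order of the vertices).\<close>
definition chains :: "'a set set \<Rightarrow> nat \<Rightarrow> ('a set \<Rightarrow> 'f::field) set" where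
  "chains K k = {c. \<forall>\<sigma>. c \<sigma> \<noteq> 0 \<longrightarrow> \<sigma> \<in> K \<and> finite \<sigma> \<and> card \<sigma> = k + 1}"

definition bdry :: "'a::linorder set set \<Rightarrow> nat \<Rightarrow> ('a set \<Rightarrow> 'f::field) \<Rightarrow> ('a set \<Rightarrow> 'f)" where
  "bdry L k c = (\<lambda>\<tau>. if finite \<tau> \<and> card \<tau> = k then
      (\<Sum>\<sigma>\<in>{\<sigma>\<in>L. finite \<sigma> \<and> card \<sigma> = k + 1 \<and> \<tau> \<subset> \<sigma>}.
         (-1) ^ card {w\<in>\<tau>. w < the_elem (\<sigma> - \<tau>)} * c \<sigma>)
    else 0)"

definition cycles :: "'a::linorder set set \<Rightarrow> nat \<Rightarrow> ('a set \<Rightarrow> 'f::field) set" where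
  "cycles K k = {c \<in> chains K k. k = 0 \<or> bdry K k c = 0}"

definition boundaries :: "'a::linorder set set \<Rightarrow> nat \<Rightarrow> ('a set \<Rightarrow> 'f::field) set" where
  "boundaries L k = {bdry L (k + 1) c | c. c \<in> chains L (k + 1)}"

definition fscale :: "'f::field \<Rightarrow> ('a set \<Rightarrow> 'f) \<Rightarrow> ('a set \<Rightarrow> 'f)" where
  "fscale a c = (\<lambda>\<sigma>. a * c \<sigma>)"

text \<open>Rank of H_k(K) \<rightarrow> H_k(L) induced by inclusion K \<subseteq> L:
  dim((Z_k(K) + B_k(L)) / B_k(L)) = dim(Z_k(K) + B_k(L)) - dim(B_k(L)).\<close>
definition hom_rank :: "'f::field itself \<Rightarrow> 'a::linorder set set \<Rightarrow> 'a set set \<Rightarrow> nat \<Rightarrow> nat" where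
  "hom_rank _ K L k =
     vector_space.dim (fscale :: 'f \<Rightarrow> _) {z + b | z b. z \<in> (cycles K k :: ('a set \<Rightarrow> 'f) set) \<and> b \<in> boundaries L k}
     - vector_space.dim (fscale :: 'f \<Rightarrow> _) (boundaries L k :: ('a set \<Rightarrow> 'f) set)"

record pt6 =
  c1 :: real  c2 :: real  c3 :: real  c4 :: real  c5 :: real  c6 :: real

definition le6 :: "pt6 \<Rightarrow> pt6 \<Rightarrow> bool" where
  "le6 a b \<longleftrightarrow> c1 a \<le> c1 b \<and> c2 a \<ge> c2 b \<and> c3 a \<ge> c3 b \<and> c4 a \<ge> c4 b \<and>
               c5 a \<le> c5 b \<and> c6 a \<le> c6 b"

definition admissible :: "pt6 \<Rightarrow> bool" where
  "admissible a \<longleftrightarrow> c1 a \<le> c2 a \<and> c4 a \<le> c5 a \<and> c3 a \<ge> 0 \<and> c6 a \<ge> 0 \<and>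
      {c1 a..c2 a} \<subseteq> {c4 a..c5 a} \<and> c3 a \<le> c6 a"

definition triv_nonadmissible :: "pt6 \<Rightarrow> bool" where
  "triv_nonadmissible a \<longleftrightarrow> \<not> (\<exists>b. admissible b \<and> le6 b a \<and> b \<noteq> a)"

definition rk :: "'f::field itself \<Rightarrow> nat \<Rightarrow> 'a::linorder set \<Rightarrow> (real \<Rightarrow> 'a \<Rightarrow> 'a \<Rightarrow> real) \<Rightarrow> pt6 \<Rightarrow> enat" where
  "rk F k X d a =
     (if admissible a then
        enat (hom_rank F (rips X (vee d (c1 a) (c2 a)) (c3 a))
                         (rips X (vee d (c4 a) (c5 a)) (c6 a)) k)
      else if triv_nonadmissible a then \<infinity> else 0)"

definition shift6 :: "pt6 \<Rightarrow> real \<Rightarrow> pt6" where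
  "shift6 a \<epsilon> = \<lparr>c1 = c1 a + \<epsilon>, c2 = c2 a - \<epsilon>, c3 = c3 a - \<epsilon>,
                   c4 = c4 a - \<epsilon>, c5 = c5 a + \<epsilon>, c6 = c6 a + \<epsilon>\<rparr>"

definition interleaving_dist :: "(pt6 \<Rightarrow> enat) \<Rightarrow> (pt6 \<Rightarrow> enat) \<Rightarrow> ereal" where
  "interleaving_dist F G = Inf {ereal \<epsilon> | \<epsilon>. \<epsilon> \<ge> 0 \<and>
      (\<forall>a. F a \<ge> G (shift6 a \<epsilon>) \<and> G a \<ge> F (shift6 a \<epsilon>))}"

end

theory Submission
  imports Defs
begin

text \<open>
  An \<open>e\<close>-tripod yields, by choosing preimages, maps \<open>f : Y \<rightarrow> X\<close> and \<open>g : X \<rightarrow> Y\<close> that change the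
  time-smoothed distances by at most \<open>2e\<close>. Shrinking the first complex and enlarging the second
  by \<open>2e\<close> in every parameter, \<open>f\<close> maps the Rips complex \<open>K\<^sub>Y\<close> into \<open>K\<^sub>X\<close>, \<open>g\<close> maps \<open>L\<^sub>X\<close> into
  \<open>L\<^sub>Y\<close>, and \<open>g \<circ> f\<close> is contiguous to the identity inside \<open>L\<^sub>Y\<close>. Contiguous simplicial maps are
  chain homotopic via the prism operator, so \<open>H\<^sub>k(K\<^sub>Y) \<rightarrow> H\<^sub>k(L\<^sub>Y)\<close> factors through
  \<open>H\<^sub>k(K\<^sub>X) \<rightarrow> H\<^sub>k(L\<^sub>X)\<close> and has no larger rank. Together with the symmetric statement this
  is a \<open>2e\<close>-interleaving of the rank invariants; the non-admissible points are handled by the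
  conventions in the definition of \<open>rk\<close>.
\<close>

section \<open>Inversions and signs of permutations\<close>

fun inversions :: "'a::linorder list \<Rightarrow> nat" where
  "inversions [] = 0"
| "inversions (x # xs) = length (filter (\<lambda>y. y < x) xs) + inversions xs"

lemma inversions_sorted: "sorted xs \<Longrightarrow> inversions xs = 0"
  by (induction xs) (auto simp: filter_empty_conv not_less)

lemma inversions_remove:
  "inversions (us @ v # ws)
     = inversions (us @ ws) + length (filter (\<lambda>u. v < u) us) + length (filter (\<lambda>w. w < v) ws)"
  by (induction us) auto

lemma length_filter_less_greater:
  "(x::'a::linorder) \<notin> set xs
     \<Longrightarrow> length (filter (\<lambda>u. u < x) xs) + length (filter (\<lambda>u. x < u) xs) = length xs"
  by (induction xs) auto

lemma length_filter_distinct: "distinct xs \<Longrightarrow> length (filter P xs) = card {x \<in> set xs. P x}"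
  by (metis distinct_filter distinct_card set_filter)

lemma length_filter_distinct_set_eq:
  "distinct xs \<Longrightarrow> distinct ys \<Longrightarrow> set xs = set ys \<Longrightarrow> length (filter P xs) = length (filter P ys)"
  by (simp add: length_filter_distinct)

lemma minus_one_power_parity: "even m = even n \<Longrightarrow> (-1 :: 'a::ring_1) ^ m = (-1) ^ n"
  by (simp add: minus_one_power_iff)

lemma even_inversions_move:
  assumes "x \<notin> set bs"
  shows "even (inversions (as @ bs @ x # cs) + inversions (as @ x # bs @ cs) + length bs)"
proof -
  let ?inv = "inversions (as @ bs @ cs)"
    and ?gt = "\<lambda>xs. length (filter (\<lambda>u. x < u) xs)" and ?lt = "\<lambda>xs. length (filter (\<lambda>u. u < x) xs)"
  have "inversions (as @ bs @ x # cs) = ?inv + ?gt as + ?gt bs + ?lt cs"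
    using inversions_remove[of "as @ bs" x cs] by simp
  moreover have "inversions (as @ x # bs @ cs) = ?inv + ?gt as + ?lt bs + ?lt cs"
    using inversions_remove[of as x "bs @ cs"] by simp
  moreover have "?lt bs + ?gt bs = length bs"
    using length_filter_less_greater[OF assms] .
  ultimately have "inversions (as @ bs @ x # cs) + inversions (as @ x # bs @ cs) + length bs
      = 2 * (?inv + ?gt as + ?lt cs + ?lt bs + ?gt bs)"
    by (simp only: mult_2 ac_simps)
  then show ?thesis by (metis dvd_triv_left)
qed

lemma even_inversions_remove:
  assumes "distinct (us @ v # ws)"
  shows "even (card {w \<in> set (us @ ws). w < v} + inversions (us @ v # ws)
               + length us + inversions (us @ ws))"
proof -
  let ?gt = "\<lambda>xs. length (filter (\<lambda>u. v < u) xs)" and ?lt = "\<lambda>xs. length (filter (\<lambda>u. u < v) xs)"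
  have "card {w \<in> set (us @ ws). w < v} = ?lt us + ?lt ws"
    using length_filter_distinct[of "us @ ws" "\<lambda>u. u < v"] assms by simp
  moreover have "inversions (us @ v # ws) = inversions (us @ ws) + ?gt us + ?lt ws"
    by (rule inversions_remove)
  moreover have "?lt us + ?gt us = length us"
    using length_filter_less_greater[of v us] assms by simp
  ultimately have "card {w \<in> set (us @ ws). w < v} + inversions (us @ v # ws) + length us
      + inversions (us @ ws) = 2 * (inversions (us @ ws) + ?lt us + ?gt us + ?lt ws)"
    by (simp only: mult_2 ac_simps)
  then show ?thesis by (metis dvd_triv_left)
qed

lemma even_inversions_map_perm:
  fixes g :: "'b::linorder \<Rightarrow> 'a::linorder"
  assumes "distinct ys" "distinct zs" "set ys = set zs" "inj_on g (set ys)"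
  shows "even (inversions (map g ys) + inversions ys + inversions (map g zs) + inversions zs)"
  using assms
proof (induction ys arbitrary: zs)
  case (Cons y ys)
  let ?gt = "\<lambda>xs. length (filter (\<lambda>u. y < u) xs)" and ?lt = "\<lambda>xs. length (filter (\<lambda>u. u < y) xs)"
    and ?gtg = "\<lambda>xs. length (filter (\<lambda>u. g y < u) xs)" and ?ltg = "\<lambda>xs. length (filter (\<lambda>u. u < g y) xs)"
  obtain us ws where zs: "zs = us @ y # ws"
    using Cons.prems(3) by (metis list.set_intros(1) split_list)
  have d: "distinct (us @ ws)" "y \<notin> set us" and ys: "set ys = set (us @ ws)"
    using Cons.prems zs by auto
  have inj: "inj_on g (set (us @ ws))"
    by (rule inj_on_subset[OF Cons.prems(4)]) (use ys in auto)
  have gy: "g y \<notin> set (map g us)"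
    using Cons.prems(3,4) zs d(2) by (auto simp: inj_on_def)
  have "even (inversions (map g ys) + inversions ys + inversions (map g (us @ ws))
      + inversions (us @ ws))"
    using Cons.IH[OF _ d(1) ys] Cons.prems(1) ys inj by simp
  then obtain t where IH: "inversions (map g ys) + inversions ys + inversions (map g (us @ ws))
      + inversions (us @ ws) = 2 * t" ..
  have dys: "distinct ys" using Cons.prems(1) by simp
  have "distinct (map g ys)" "distinct (map g (us @ ws))"
    unfolding distinct_map using dys d(1) inj ys by simp_all
  then have ltg: "?ltg (map g ys) = ?ltg (map g us) + ?ltg (map g ws)"
    using length_filter_distinct_set_eq[of "map g ys" "map g (us @ ws)"] ys by (simp add: image_Un)
  have lt: "?lt ys = ?lt us + ?lt ws"
    using length_filter_distinct_set_eq[OF dys d(1) ys] by simp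
  have "inversions zs = inversions (us @ ws) + ?gt us + ?lt ws"
    "inversions (map g zs) = inversions (map g (us @ ws)) + ?gtg (map g us) + ?ltg (map g ws)"
    unfolding zs using inversions_remove[of "map g us" "g y" "map g ws"] inversions_remove by simp_all
  moreover have "?lt us + ?gt us = length us" "?ltg (map g us) + ?gtg (map g us) = length us"
    using length_filter_less_greater[OF d(2)] length_filter_less_greater[OF gy] by simp_all
  ultimately have "inversions (map g (y # ys)) + inversions (y # ys) + inversions (map g zs)
      + inversions zs = 2 * (t + ?ltg (map g ws) + ?lt ws + length us)"
    using IH ltg lt by simp
  then show ?case by simp
qed simp

section \<open>Oriented simplices and their boundary\<close>

text \<open>The simplex \<open>set xs\<close> oriented by the order of the list \<open>xs\<close>, written in the basis of
  increasingly ordered simplices that underlies \<open>bdry\<close>; it vanishes if \<open>xs\<close> repeats a vertex.\<close>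
definition oriented :: "'a::linorder list \<Rightarrow> 'a set \<Rightarrow> 'f::field" where
  "oriented xs = (\<lambda>\<sigma>. if distinct xs \<and> \<sigma> = set xs then (-1) ^ inversions xs else 0)"

lemma oriented_nondistinct: "\<not> distinct xs \<Longrightarrow> oriented xs = 0"
  by (simp add: oriented_def fun_eq_iff)

lemma oriented_sorted_list_of_set:
  "finite \<sigma> \<Longrightarrow> oriented (sorted_list_of_set \<sigma>) = (\<lambda>\<tau>. if \<tau> = \<sigma> then 1 else 0)"
  by (simp add: oriented_def inversions_sorted fun_eq_iff)

definition remove_nth :: "nat \<Rightarrow> 'a list \<Rightarrow> 'a list" where
  "remove_nth m xs = take m xs @ drop (Suc m) xs"

lemma remove_nth_Cons_0 [simp]: "remove_nth 0 (x # xs) = xs"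
  by (simp add: remove_nth_def)

lemma remove_nth_Cons_Suc [simp]: "remove_nth (Suc m) (x # xs) = x # remove_nth m xs"
  by (simp add: remove_nth_def)

lemma remove_nth_append:
  "remove_nth m (us @ vs)
     = (if m < length us then remove_nth m us @ vs else us @ remove_nth (m - length us) vs)"
  by (auto simp: remove_nth_def Suc_diff_le)

lemma set_remove_nth_subset: "set (remove_nth m xs) \<subseteq> set xs"
  unfolding remove_nth_def using set_take_subset set_drop_subset by fastforce

lemma distinct_remove_nth: "distinct xs \<Longrightarrow> distinct (remove_nth m xs)"
proof -
  assume "distinct xs"
  then have "distinct (take m xs)" "set (take m xs) \<inter> set (drop m xs) = {}"
    by (metis append_take_drop_id distinct_append)+
  moreover have "set (drop (Suc m) xs) \<subseteq> set (drop m xs)"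
    by (simp add: set_drop_subset_set_drop)
  ultimately show ?thesis
    unfolding remove_nth_def using \<open>distinct xs\<close> by auto
qed

lemma set_remove_nth:
  assumes "distinct xs" "m < length xs"
  shows "set (remove_nth m xs) = set xs - {xs ! m}"
proof -
  have xs: "xs = take m xs @ xs ! m # drop (Suc m) xs" using assms(2) by (simp add: id_take_nth_drop)
  then have "distinct (take m xs @ xs ! m # drop (Suc m) xs)" using assms(1) by simp
  then show ?thesis unfolding remove_nth_def by (subst (3) xs) auto
qed

lemma sorted_remove_nth: "sorted xs \<Longrightarrow> sorted (remove_nth m xs)"
proof -
  assume "sorted xs"
  then have "sorted (take m xs)" "\<forall>x\<in>set (take m xs). \<forall>y\<in>set (drop m xs). x \<le> y"
    by (metis append_take_drop_id sorted_append)+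
  moreover have "set (drop (Suc m) xs) \<subseteq> set (drop m xs)"
    by (simp add: set_drop_subset_set_drop)
  ultimately show ?thesis
    unfolding remove_nth_def using \<open>sorted xs\<close> by (auto simp: sorted_append sorted_wrt_drop)
qed

definition signed :: "nat \<Rightarrow> 'v::ab_group_add \<Rightarrow> 'v" where
  "signed m x = (if even m then x else - x)"

lemma signed_0 [simp]: "signed 0 x = x"
  by (simp add: signed_def)

lemma signed_Suc: "signed (Suc m) x = - signed m x"
  by (simp add: signed_def)

lemma signed_apply: "signed m f x = signed m (f x)"
  by (simp add: signed_def)

lemma signed_eq_minus_one_power: "signed m (c :: 'a::ring_1) = (-1) ^ m * c"
  by (simp add: signed_def)

text \<open>The alternating sum of \<open>T\<close> over the faces of \<open>xs\<close> (see \<open>alt_faces_eq_sum\<close>), defined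
  recursively for the sake of the prism computation below.\<close>
fun alt_faces :: "('c list \<Rightarrow> 'v::ab_group_add) \<Rightarrow> 'c list \<Rightarrow> 'v" where
  "alt_faces T [] = 0"
| "alt_faces T (y # ys) = T ys - alt_faces (\<lambda>zs. T (y # zs)) ys"

lemma alt_faces_eq_sum: "alt_faces T xs = (\<Sum>m<length xs. signed m (T (remove_nth m xs)))"
proof (induction xs arbitrary: T)
  case (Cons y ys)
  show ?case
    by (simp only: alt_faces.simps Cons.IH length_Cons sum.lessThan_Suc_shift signed_Suc
        remove_nth_Cons_0 remove_nth_Cons_Suc sum_negf signed_0) simp
qed simp

lemma alt_faces_cong:
  assumes "\<And>m. m < length xs \<Longrightarrow> T (remove_nth m xs) = T' (remove_nth m xs)"
  shows "alt_faces T xs = alt_faces T' xs"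
  unfolding alt_faces_eq_sum using assms by simp

lemma alt_faces_diff: "alt_faces (\<lambda>zs. A zs - B zs) xs = alt_faces A xs - alt_faces B xs"
  by (induction xs arbitrary: A B) (auto simp: algebra_simps)

lemma alt_faces_map: "alt_faces T (map g xs) = alt_faces (\<lambda>zs. T (map g zs)) xs"
  by (induction xs arbitrary: T) auto

lemma alt_faces_additive:
  assumes "\<And>a b. M (a - b) = M a - M b"
  shows "M (alt_faces T xs) = alt_faces (\<lambda>zs. M (T zs)) xs"
proof -
  have M0: "M 0 = 0" using assms[of 0 0] by simp
  show ?thesis by (induction xs arbitrary: T) (simp_all add: M0 assms)
qed

lemma not_distinct_remove_nth:
  assumes "m \<noteq> length as" "m \<noteq> Suc (length as + length bs)"
  shows "\<not> distinct (remove_nth m (as @ x # bs @ x # cs))"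
proof (cases "m < length as")
  case True
  then show ?thesis by (simp add: remove_nth_append)
next
  case False
  define j where "j = m - Suc (length as)"
  have m: "m = length as + Suc j" using False assms(1) unfolding j_def by linarith
  show ?thesis
  proof (cases "j < length bs")
    case True
    then show ?thesis unfolding m by (simp add: remove_nth_append)
  next
    case False
    define i where "i = j - Suc (length bs)"
    have "j = length bs + Suc i" using False assms(2) m unfolding i_def by linarith
    then show ?thesis unfolding m by (simp add: remove_nth_append)
  qed
qed

text \<open>Deleting either copy of a repeated vertex gives the same simplex with opposite signs,
  and every other deletion leaves a repeated vertex.\<close>
lemma alt_faces_oriented_nondistinct:
  assumes "\<not> distinct xs"
  shows "alt_faces oriented xs = (0 :: 'a::linorder set \<Rightarrow> 'f::field)"
proof -
  obtain as x bs cs where xs: "xs = as @ x # bs @ x # cs"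
    using not_distinct_decomp[OF assms] by fastforce
  define p q A B where "p = length as" and "q = Suc (length as + length bs)"
    and "A = as @ bs @ x # cs" and "B = as @ x # bs @ cs"
  have pq: "p \<in> {..<length xs}" "q \<in> {..<length xs}" "p \<noteq> q"
    using xs by (auto simp: p_def q_def)
  have "alt_faces oriented xs = (\<Sum>m<length xs. signed m (oriented (remove_nth m xs) :: 'a set \<Rightarrow> 'f))"
    by (rule alt_faces_eq_sum)
  also have "\<dots> = (\<Sum>m\<in>{p, q}. signed m (oriented (remove_nth m xs)))"
  proof (rule sum.mono_neutral_right)
    show "\<forall>m\<in>{..<length xs} - {p, q}. signed m (oriented (remove_nth m xs) :: 'a set \<Rightarrow> 'f) = 0"
      unfolding xs p_def q_def by (simp add: not_distinct_remove_nth oriented_nondistinct signed_def)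
  qed (use pq in auto)
  also have "\<dots> = signed p (oriented A) + signed q (oriented B)"
    using pq unfolding xs p_def q_def A_def B_def by (simp add: remove_nth_append)
  also have "\<dots> = 0"
  proof (cases "distinct A")
    case False
    then have "\<not> distinct B" unfolding A_def B_def by auto
    with False show ?thesis by (simp add: oriented_nondistinct signed_def)
  next
    case True
    then have "x \<notin> set bs" unfolding A_def by simp
    then have "even (inversions A + inversions B + length bs)"
      unfolding A_def B_def by (rule even_inversions_move)
    then have "even (q + inversions B) = even (Suc (p + inversions A))"
      unfolding p_def q_def by presburger
    from minus_one_power_parity[OF this, where 'a='f]
    have "(-1 :: 'f) ^ (q + inversions B) = - ((-1) ^ (p + inversions A))" by simp
    moreover have "set B = set A" "distinct B" using True unfolding A_def B_def by auto
    ultimately show ?thesis using True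
      by (simp add: fun_eq_iff signed_apply oriented_def)
         (simp add: signed_eq_minus_one_power power_add)
  qed
  finally show ?thesis .
qed

lemma sum_fun_apply: "(\<Sum>a\<in>A. f a) x = (\<Sum>a\<in>A. f a x)"
  by (induction A rule: infinite_finite_induct) auto

lemma alt_faces_oriented_facet:
  assumes "distinct xs" "m < length xs"
  shows "alt_faces oriented xs (set xs - {xs ! m})
           = ((-1) ^ m * (-1) ^ inversions (remove_nth m xs) :: 'f::field)"
proof -
  have "alt_faces oriented xs (set xs - {xs ! m})
      = (\<Sum>i<length xs. signed i (oriented (remove_nth i xs) (set xs - {xs ! m}) :: 'f))"
    by (simp add: alt_faces_eq_sum signed_apply sum_fun_apply)
  also have "\<dots> = (\<Sum>i\<in>{m}. signed i (oriented (remove_nth i xs) (set xs - {xs ! m})))"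
  proof (rule sum.mono_neutral_right)
    show "\<forall>i\<in>{..<length xs} - {m}. signed i (oriented (remove_nth i xs) (set xs - {xs ! m}) :: 'f) = 0"
    proof
      fix i assume "i \<in> {..<length xs} - {m}"
      then have i: "i < length xs" "i \<noteq> m" by auto
      then have "xs ! i \<in> set xs - {xs ! m}"
        using assms by (simp add: nth_eq_iff_index_eq)
      then have "set (remove_nth i xs) \<noteq> set xs - {xs ! m}"
        using set_remove_nth[OF assms(1) i(1)] by auto
      then show "signed i (oriented (remove_nth i xs) (set xs - {xs ! m}) :: 'f) = 0"
        by (simp add: oriented_def signed_def)
    qed
  qed (use assms in auto)
  also have "\<dots> = (-1) ^ m * (-1) ^ inversions (remove_nth m xs)"
    using assms by (simp add: oriented_def set_remove_nth distinct_remove_nth signed_apply)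
      (simp add: signed_eq_minus_one_power)
  finally show ?thesis .
qed

lemma alt_faces_oriented_not_facet:
  assumes "distinct xs" "\<forall>v\<in>set xs. \<tau> \<noteq> set xs - {v}"
  shows "alt_faces oriented xs \<tau> = (0 :: 'f::field)"
proof -
  have "oriented (remove_nth m xs) \<tau> = (0 :: 'f)" if "m < length xs" for m
    using assms that by (simp add: oriented_def set_remove_nth)
  then have "(\<Sum>m<length xs. signed m (oriented (remove_nth m xs) \<tau> :: 'f)) = 0"
    by (intro sum.neutral) (simp add: signed_def)
  then show ?thesis by (simp add: alt_faces_eq_sum signed_apply sum_fun_apply)
qed

lemma bdry_zero: "bdry L k 0 = 0"
  by (simp add: bdry_def fun_eq_iff)

lemma bdry_oriented_facet:
  assumes "finite L" "set xs \<in> L" "distinct xs" "length xs = Suc k" "v \<in> set xs"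
  shows "bdry L k (oriented xs) (set xs - {v})
           = ((-1) ^ card {w \<in> set xs - {v}. w < v} * (-1) ^ inversions xs :: 'f::field)"
proof -
  let ?\<tau> = "set xs - {v}" and ?S = "{\<sigma> \<in> L. finite \<sigma> \<and> card \<sigma> = k + 1 \<and> set xs - {v} \<subset> \<sigma>}"
  have \<tau>: "finite ?\<tau>" "card ?\<tau> = k" "set xs - ?\<tau> = {v}" "?\<tau> \<subset> set xs"
    using assms by (auto simp: distinct_card)
  have "bdry L k (oriented xs) ?\<tau>
      = (\<Sum>\<sigma>\<in>?S. (-1) ^ card {w \<in> ?\<tau>. w < the_elem (\<sigma> - ?\<tau>)} * (oriented xs \<sigma> :: 'f))"
    using \<tau> by (simp add: bdry_def)
  also have "\<dots> = (\<Sum>\<sigma>\<in>?S. if \<sigma> = set xs then (-1) ^ card {w \<in> ?\<tau>. w < v} * (-1) ^ inversions xs else 0)"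
    using \<tau>(3) assms(3) by (intro sum.cong) (auto simp: oriented_def)
  also have "\<dots> = (-1) ^ card {w \<in> ?\<tau>. w < v} * (-1) ^ inversions xs"
    using assms \<tau>(4) by (simp add: distinct_card)
  finally show ?thesis .
qed

lemma bdry_oriented_not_facet:
  assumes "distinct xs" "length xs = Suc k" "\<forall>v\<in>set xs. \<tau> \<noteq> set xs - {v}"
  shows "bdry L k (oriented xs) \<tau> = (0 :: 'f::field)"
proof -
  have "oriented xs \<sigma> = (0 :: 'f)"
    if "finite \<tau>" "card \<tau> = k" "card \<sigma> = k + 1" "\<tau> \<subset> \<sigma>" for \<sigma>
  proof (rule ccontr)
    assume "oriented xs \<sigma> \<noteq> (0 :: 'f)"
    then have \<sigma>: "\<sigma> = set xs" by (simp add: oriented_def split: if_splits)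
    have "card (\<sigma> - \<tau>) = 1"
      using that by (simp add: card_Diff_subset psubset_imp_subset \<sigma>)
    then obtain v where "\<sigma> - \<tau> = {v}" by (rule card_1_singletonE)
    then have "v \<in> set xs" "\<tau> = set xs - {v}" using that(4) \<sigma> by blast+
    with assms(3) show False by blast
  qed
  then show ?thesis by (simp add: bdry_def)
qed

lemma bdry_oriented:
  fixes xs :: "'a::linorder list"
  assumes L: "finite L" and len: "length xs = Suc k" and xs: "distinct xs \<Longrightarrow> set xs \<in> L"
  shows "bdry L k (oriented xs) = (alt_faces oriented xs :: 'a set \<Rightarrow> 'f::field)"
proof (cases "distinct xs")
  case False
  then show ?thesis by (simp add: oriented_nondistinct bdry_zero alt_faces_oriented_nondistinct)
next
  case d: True
  show ?thesis
  proof
    fix \<tau>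
    show "bdry L k (oriented xs) \<tau> = (alt_faces oriented xs \<tau> :: 'f)"
    proof (cases "\<exists>v\<in>set xs. \<tau> = set xs - {v}")
      case True
      then obtain m where m: "m < length xs" and \<tau>: "\<tau> = set xs - {xs ! m}"
        by (metis in_set_conv_nth)
      define us ws where "us = take m xs" and "ws = drop (Suc m) xs"
      have xs_split: "us @ xs ! m # ws = xs" and rem: "us @ ws = remove_nth m xs" and "length us = m"
        using m unfolding us_def ws_def remove_nth_def by (simp_all add: id_take_nth_drop[symmetric])
      have "even (card {w \<in> set (us @ ws). w < xs ! m} + inversions (us @ xs ! m # ws)
                  + length us + inversions (us @ ws))"
        by (rule even_inversions_remove) (simp only: xs_split d)
      then have "even (card {w \<in> set xs - {xs ! m}. w < xs ! m} + inversions xs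
                       + m + inversions (remove_nth m xs))"
        unfolding xs_split rem \<open>length us = m\<close> set_remove_nth[OF d m] .
      then have "even (card {w \<in> set xs - {xs ! m}. w < xs ! m} + inversions xs)
                 = even (m + inversions (remove_nth m xs))"
        by presburger
      then have "(-1 :: 'f) ^ (card {w \<in> set xs - {xs ! m}. w < xs ! m} + inversions xs)
                 = (-1) ^ (m + inversions (remove_nth m xs))"
        by (rule minus_one_power_parity)
      then show ?thesis
        unfolding \<tau> bdry_oriented_facet[OF L xs[OF d] d len nth_mem[OF m]]
          alt_faces_oriented_facet[OF d m]
        by (simp add: power_add)
    next
      case False
      then have "\<forall>v\<in>set xs. \<tau> \<noteq> set xs - {v}" by blast
      then show ?thesis
        using bdry_oriented_not_facet[OF d len, where 'f='f]
          alt_faces_oriented_not_facet[OF d, where 'f='f]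
        by simp
    qed
  qed
qed

lemma vector_space_fscale: "vector_space (fscale :: 'f::field \<Rightarrow> ('a set \<Rightarrow> 'f) \<Rightarrow> ('a set \<Rightarrow> 'f))"
  by unfold_locales (simp_all add: fscale_def fun_eq_iff algebra_simps)

definition lincomb :: "'i set \<Rightarrow> ('i \<Rightarrow> 'f) \<Rightarrow> ('i \<Rightarrow> 'x \<Rightarrow> 'f::field) \<Rightarrow> 'x \<Rightarrow> 'f" where
  "lincomb I a e = (\<lambda>\<tau>. \<Sum>i\<in>I. a i * e i \<tau>)"

definition matrix_map :: "('y \<Rightarrow> 'x set) \<Rightarrow> ('y \<Rightarrow> 'x \<Rightarrow> 'f) \<Rightarrow> ('x \<Rightarrow> 'f::field) \<Rightarrow> 'y \<Rightarrow> 'f" where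
  "matrix_map S w c = (\<lambda>\<tau>. \<Sum>\<sigma>\<in>S \<tau>. w \<tau> \<sigma> * c \<sigma>)"

lemma lincomb_cong:
  assumes "\<And>i. i \<in> I \<Longrightarrow> a i \<noteq> 0 \<Longrightarrow> e i = e' i"
  shows "lincomb I a e = lincomb I a e'"
  unfolding lincomb_def
proof (intro ext sum.cong refl)
  fix \<tau> i assume "i \<in> I"
  then show "a i * e i \<tau> = a i * e' i \<tau>" using assms by (cases "a i = 0") auto
qed

lemma lincomb_add: "lincomb I a e + lincomb I a e' = lincomb I a (\<lambda>i. e i + e' i)"
  unfolding lincomb_def by (rule ext) (simp add: distrib_left sum.distrib)

lemma lincomb_diff: "lincomb I a e - lincomb I a e' = lincomb I a (\<lambda>i. e i - e' i)"
  unfolding lincomb_def by (rule ext) (simp add: right_diff_distrib sum_subtractf)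

lemma matrix_map_lincomb: "matrix_map S w (lincomb I a e) = lincomb I a (\<lambda>i. matrix_map S w (e i))"
  unfolding matrix_map_def lincomb_def
  by (rule ext) (simp add: sum_distrib_left sum_distrib_right mult.left_commute sum.swap[of _ "S _"])

lemma matrix_map_0: "matrix_map S w 0 = 0"
  unfolding matrix_map_def by (rule ext) simp

lemma matrix_map_add: "matrix_map S w (x + y) = matrix_map S w x + matrix_map S w y"
  unfolding matrix_map_def by (rule ext) (simp add: distrib_left sum.distrib)

lemma matrix_map_diff: "matrix_map S w (x - y) = matrix_map S w x - matrix_map S w y"
  unfolding matrix_map_def by (rule ext) (simp add: right_diff_distrib sum_subtractf)

lemma matrix_map_scale: "matrix_map S w (fscale a x) = fscale a (matrix_map S w x)"
  unfolding matrix_map_def fscale_def by (rule ext) (simp add: sum_distrib_left mult.left_commute)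

lemma matrix_map_nonzero:
  assumes "matrix_map S w c \<tau> \<noteq> 0"
  obtains \<sigma> where "\<sigma> \<in> S \<tau>" "w \<tau> \<sigma> \<noteq> 0" "c \<sigma> \<noteq> 0"
proof -
  have "(\<Sum>\<sigma>\<in>S \<tau>. w \<tau> \<sigma> * c \<sigma>) \<noteq> 0" using assms by (simp add: matrix_map_def)
  then obtain \<sigma> where "\<sigma> \<in> S \<tau>" "w \<tau> \<sigma> * c \<sigma> \<noteq> 0"
    by (rule sum.not_neutral_contains_not_neutral)
  with that show ?thesis by simp
qed

lemma matrix_map_oriented_sorted:
  assumes "finite V" "S \<subseteq> V"
  shows "matrix_map (\<lambda>_. Pow V) w (oriented (sorted_list_of_set S)) = (\<lambda>\<tau>. w \<tau> S)"
proof
  fix \<tau>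
  have "finite S" using assms finite_subset by blast
  then have "matrix_map (\<lambda>_. Pow V) w (oriented (sorted_list_of_set S)) \<tau>
      = (\<Sum>\<sigma>\<in>Pow V. if \<sigma> = S then w \<tau> \<sigma> else 0)"
    unfolding matrix_map_def by (intro sum.cong) (auto simp: oriented_sorted_list_of_set)
  also have "\<dots> = w \<tau> S" using assms by simp
  finally show "matrix_map (\<lambda>_. Pow V) w (oriented (sorted_list_of_set S)) \<tau> = w \<tau> S" .
qed

lemma bdry_eq_matrix_map:
  "bdry L k = matrix_map (\<lambda>\<tau>. {\<sigma> \<in> L. finite \<sigma> \<and> card \<sigma> = k + 1 \<and> \<tau> \<subset> \<sigma>})
     (\<lambda>\<tau> \<sigma>. if finite \<tau> \<and> card \<tau> = k then (-1) ^ card {w \<in> \<tau>. w < the_elem (\<sigma> - \<tau>)} else 0)"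
  unfolding matrix_map_def bdry_def by (intro ext) auto

lemma bdry_lincomb: "bdry L k (lincomb I a e) = lincomb I a (\<lambda>i. bdry L k (e i))"
  by (simp add: bdry_eq_matrix_map matrix_map_lincomb)

lemma bdry_diff: "bdry L k (x - y) = bdry L k x - bdry L k y"
  by (simp add: bdry_eq_matrix_map matrix_map_diff)

lemma lincomb_oriented_expand:
  assumes "\<And>\<sigma>. c \<sigma> \<noteq> 0 \<Longrightarrow> \<sigma> \<in> K" "finite K" "\<And>\<sigma>. \<sigma> \<in> K \<Longrightarrow> finite \<sigma>"
  shows "c = lincomb K c (\<lambda>\<sigma>. oriented (sorted_list_of_set \<sigma>))"
proof
  fix \<tau>
  have "lincomb K c (\<lambda>\<sigma>. oriented (sorted_list_of_set \<sigma>)) \<tau> = (\<Sum>\<sigma>\<in>K. if \<sigma> = \<tau> then c \<sigma> else 0)"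
    unfolding lincomb_def using assms(3) by (intro sum.cong) (auto simp: oriented_sorted_list_of_set)
  also have "\<dots> = c \<tau>" using assms(1,2) by (auto simp: sum.delta)
  finally show "c \<tau> = lincomb K c (\<lambda>\<sigma>. oriented (sorted_list_of_set \<sigma>)) \<tau>" by simp
qed

lemma lincomb_oriented_expand_Pow:
  assumes "finite V" "\<And>\<sigma>. c \<sigma> \<noteq> 0 \<Longrightarrow> \<sigma> \<subseteq> V"
  shows "c = lincomb (Pow V) c (\<lambda>\<sigma>. oriented (sorted_list_of_set \<sigma>))"
  by (rule lincomb_oriented_expand) (use assms in \<open>auto intro: finite_subset\<close>)

lemma chains_support: "c \<in> chains K k \<Longrightarrow> K \<subseteq> Pow V \<Longrightarrow> c \<sigma> \<noteq> 0 \<Longrightarrow> \<sigma> \<subseteq> V"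
  by (auto simp: chains_def)

section \<open>Chain maps induced by vertex maps\<close>

lemma oriented_map_perm:
  fixes g :: "'b::linorder \<Rightarrow> 'a::linorder"
  assumes "distinct ys" "distinct zs" "set ys = set zs"
  shows "(-1) ^ inversions ys * oriented (map g zs) \<tau>
           = ((-1) ^ inversions zs * oriented (map g ys) \<tau> :: 'f::field)"
proof (cases "inj_on g (set ys)")
  case True
  then have "even (inversions (map g ys) + inversions ys + inversions (map g zs) + inversions zs)"
    using assms by (rule even_inversions_map_perm[rotated 3])
  then have "even (inversions ys + inversions (map g zs)) = even (inversions zs + inversions (map g ys))"
    by presburger
  then have "(-1 :: 'f) ^ (inversions ys + inversions (map g zs))
      = (-1) ^ (inversions zs + inversions (map g ys))"
    by (rule minus_one_power_parity)
  with True assms show ?thesis by (simp add: oriented_def distinct_map power_add)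
next
  case False
  with assms show ?thesis by (simp add: oriented_def distinct_map)
qed

definition chain_map ::
  "'b::linorder set \<Rightarrow> ('b \<Rightarrow> 'a::linorder) \<Rightarrow> ('b set \<Rightarrow> 'f) \<Rightarrow> ('a set \<Rightarrow> 'f::field)" where
  "chain_map V g = matrix_map (\<lambda>_. Pow V) (\<lambda>\<tau> \<sigma>. oriented (map g (sorted_list_of_set \<sigma>)) \<tau>)"

lemma chain_map_lincomb: "chain_map V g (lincomb I a e) = lincomb I a (\<lambda>i. chain_map V g (e i))"
  by (simp add: chain_map_def matrix_map_lincomb)

lemma chain_map_diff: "chain_map V g (x - y) = chain_map V g x - chain_map V g y"
  by (simp add: chain_map_def matrix_map_diff)

lemma chain_map_0: "chain_map V g 0 = 0"
  by (simp add: chain_map_def matrix_map_0)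

lemma linear_chain_map: "Vector_Spaces.linear fscale fscale (chain_map V g)"
  unfolding Vector_Spaces.linear_iff
  by (simp add: vector_space_fscale chain_map_def matrix_map_add matrix_map_scale)

lemma chain_map_oriented:
  fixes g :: "'b::linorder \<Rightarrow> 'a::linorder" and ys :: "'b list"
  assumes V: "finite V" and ys: "set ys \<subseteq> V"
  shows "chain_map V g (oriented ys) = (oriented (map g ys) :: 'a set \<Rightarrow> 'f::field)"
proof (cases "distinct ys")
  case False
  then show ?thesis by (simp add: oriented_nondistinct chain_map_0 distinct_map)
next
  case True
  define zs where "zs = sorted_list_of_set (set ys)"
  have zs: "distinct zs" "set zs = set ys" "inversions zs = 0" unfolding zs_def
    by (simp_all add: inversions_sorted)
  show ?thesis
  proof
    fix \<tau>
    have "chain_map V g (oriented ys) \<tau>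
        = (\<Sum>\<sigma>\<in>Pow V. oriented (map g (sorted_list_of_set \<sigma>)) \<tau> * (oriented ys \<sigma> :: 'f))"
      by (simp add: chain_map_def matrix_map_def)
    also have "\<dots> = (\<Sum>\<sigma>\<in>Pow V. if \<sigma> = set ys then (-1) ^ inversions ys * oriented (map g zs) \<tau> else 0)"
      by (rule sum.cong) (auto simp: oriented_def True zs_def)
    also have "\<dots> = (-1) ^ inversions ys * oriented (map g zs) \<tau>"
      using V ys by simp
    also have "\<dots> = oriented (map g ys) \<tau>"
      using oriented_map_perm[OF True zs(1) zs(2)[symmetric]] zs(3) by simp
    finally show "chain_map V g (oriented ys) \<tau> = (oriented (map g ys) \<tau> :: 'f)" .
  qed
qed

lemma bdry_chain_map_oriented:
  fixes g :: "'b::linorder \<Rightarrow> 'a::linorder"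
  assumes V: "finite V" "set xs \<subseteq> V" and K: "finite K" "set xs \<in> K"
    and L: "finite L" "g ` set xs \<in> L" and xs: "length xs = Suc k" "distinct xs"
  shows "bdry L k (chain_map V g (oriented xs))
           = (chain_map V g (bdry K k (oriented xs)) :: 'a set \<Rightarrow> 'f::field)"
proof -
  have "bdry L k (chain_map V g (oriented xs)) = bdry L k (oriented (map g xs) :: 'a set \<Rightarrow> 'f)"
    by (simp add: chain_map_oriented V)
  also have "\<dots> = alt_faces oriented (map g xs)"
    by (rule bdry_oriented) (use L xs in simp_all)
  also have "\<dots> = alt_faces (\<lambda>zs. chain_map V g (oriented zs)) xs"
    unfolding alt_faces_map
    by (rule alt_faces_cong)
       (simp add: chain_map_oriented[OF V(1) subset_trans[OF set_remove_nth_subset V(2)]])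
  also have "\<dots> = chain_map V g (alt_faces oriented xs)"
    by (rule alt_faces_additive[of "chain_map V g", symmetric]) (rule chain_map_diff)
  also have "\<dots> = chain_map V g (bdry K k (oriented xs))"
    by (subst bdry_oriented[OF K(1) xs(1) K(2)]) simp_all
  finally show ?thesis .
qed

lemma bdry_chain_map:
  fixes g :: "'b::linorder \<Rightarrow> 'a::linorder" and c :: "'b set \<Rightarrow> 'f::field"
  assumes V: "finite V" and K: "K \<subseteq> Pow V" and L: "finite L"
    and simpl: "\<And>\<sigma>. \<sigma> \<in> K \<Longrightarrow> g ` \<sigma> \<in> L" and c: "c \<in> chains K k"
  shows "bdry L k (chain_map V g c) = chain_map V g (bdry K k c)"
proof -
  have fK: "finite K" using K V by (meson finite_Pow_iff finite_subset)
  have ce: "c = lincomb K c (\<lambda>\<sigma>. oriented (sorted_list_of_set \<sigma>))"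
    by (rule lincomb_oriented_expand) (use c K V fK in \<open>auto simp: chains_def intro: finite_subset\<close>)
  have "bdry L k (chain_map V g c)
      = lincomb K c (\<lambda>\<sigma>. bdry L k (chain_map V g (oriented (sorted_list_of_set \<sigma>))))"
    by (subst ce) (simp add: chain_map_lincomb bdry_lincomb)
  also have "\<dots> = lincomb K c (\<lambda>\<sigma>. chain_map V g (bdry K k (oriented (sorted_list_of_set \<sigma>))))"
  proof (rule lincomb_cong)
    fix \<sigma> assume \<sigma>: "\<sigma> \<in> K" "c \<sigma> \<noteq> 0"
    then have "finite \<sigma>" "\<sigma> \<subseteq> V" "card \<sigma> = Suc k" using c K V by (auto simp: chains_def)
    then show "bdry L k (chain_map V g (oriented (sorted_list_of_set \<sigma>)))
        = chain_map V g (bdry K k (oriented (sorted_list_of_set \<sigma>)))"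
      by (intro bdry_chain_map_oriented) (simp_all add: V fK L \<sigma>(1) simpl)
  qed
  also have "\<dots> = chain_map V g (bdry K k c)"
    by (subst (2) ce) (simp add: chain_map_lincomb bdry_lincomb)
  finally show ?thesis .
qed

lemma chain_map_comp:
  fixes f :: "'b::linorder \<Rightarrow> 'a::linorder" and g :: "'a \<Rightarrow> 'c::linorder" and c :: "'b set \<Rightarrow> 'f::field"
  assumes V: "finite V" and W: "finite W" "f ` V \<subseteq> W" and c: "\<And>\<sigma>. c \<sigma> \<noteq> 0 \<Longrightarrow> \<sigma> \<subseteq> V"
  shows "chain_map W g (chain_map V f c) = chain_map V (g \<circ> f) c"
proof -
  have ce: "c = lincomb (Pow V) c (\<lambda>\<sigma>. oriented (sorted_list_of_set \<sigma>))"
    by (rule lincomb_oriented_expand_Pow[OF V c])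
  have "chain_map W g (chain_map V f (oriented (sorted_list_of_set \<sigma>)))
      = chain_map V (g \<circ> f) (oriented (sorted_list_of_set \<sigma>) :: 'b set \<Rightarrow> 'f)" if "\<sigma> \<subseteq> V" for \<sigma>
  proof -
    have "finite \<sigma>" using that V finite_subset by blast
    then have "set (map f (sorted_list_of_set \<sigma>)) \<subseteq> W" using that W(2) by auto
    with \<open>finite \<sigma>\<close> that show ?thesis
      by (simp add: chain_map_oriented[OF V] chain_map_oriented[OF W(1)])
  qed
  then show ?thesis
    by (subst (1 2) ce) (simp add: chain_map_lincomb, rule lincomb_cong, simp)
qed

lemma chain_map_id:
  fixes c :: "'b::linorder set \<Rightarrow> 'f::field"
  assumes V: "finite V" and c: "\<And>\<sigma>. c \<sigma> \<noteq> 0 \<Longrightarrow> \<sigma> \<subseteq> V"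
  shows "chain_map V id c = c"
proof -
  have ce: "c = lincomb (Pow V) c (\<lambda>\<sigma>. oriented (sorted_list_of_set \<sigma>))"
    by (rule lincomb_oriented_expand_Pow[OF V c])
  have "chain_map V id (oriented (sorted_list_of_set \<sigma>))
      = (oriented (sorted_list_of_set \<sigma>) :: 'b set \<Rightarrow> 'f)" if "\<sigma> \<subseteq> V" for \<sigma>
  proof -
    have "finite \<sigma>" using that V finite_subset by blast
    with that show ?thesis by (simp add: chain_map_oriented[OF V])
  qed
  then show ?thesis
    by (subst (1 2) ce) (simp add: chain_map_lincomb, rule lincomb_cong, simp)
qed

lemma chain_map_chains:
  fixes g :: "'b::linorder \<Rightarrow> 'a::linorder" and c :: "'b set \<Rightarrow> 'f::field"
  assumes K: "K \<subseteq> Pow V" and simpl: "\<And>\<sigma>. \<sigma> \<in> K \<Longrightarrow> g ` \<sigma> \<in> L" and c: "c \<in> chains K k"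
  shows "chain_map V g c \<in> chains L k"
  unfolding chains_def
proof (intro CollectI allI impI)
  fix \<tau> assume "chain_map V g c \<tau> \<noteq> 0"
  then obtain \<sigma> where "oriented (map g (sorted_list_of_set \<sigma>)) \<tau> \<noteq> (0 :: 'f)" "c \<sigma> \<noteq> 0"
    unfolding chain_map_def by (rule matrix_map_nonzero)
  then have \<sigma>: "\<sigma> \<in> K" "card \<sigma> = k + 1" "finite \<sigma>"
    and \<tau>: "distinct (map g (sorted_list_of_set \<sigma>))" "\<tau> = g ` \<sigma>"
    using c by (auto simp: chains_def oriented_def split: if_splits)
  then have "card \<tau> = k + 1" using distinct_card[OF \<tau>(1)] by simp
  with \<sigma> \<tau> simpl show "\<tau> \<in> L \<and> finite \<tau> \<and> card \<tau> = k + 1" by simp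
qed

section \<open>The chain homotopy between contiguous maps\<close>

text \<open>\<open>prism f g T [x\<^sub>0, \<dots>, x\<^sub>n] = \<Sum>\<^sub>i (-1)\<^sup>i T [f x\<^sub>0, \<dots>, f x\<^sub>i, g x\<^sub>i, \<dots>, g x\<^sub>n]\<close> is the classical
  prism operator; \<open>prism_formula\<close> is the identity \<open>\<partial>P + P\<partial> = g - f\<close> at the level of ordered
  simplices.\<close>
fun prism :: "('c \<Rightarrow> 'd) \<Rightarrow> ('c \<Rightarrow> 'd) \<Rightarrow> ('d list \<Rightarrow> 'v::ab_group_add) \<Rightarrow> 'c list \<Rightarrow> 'v" where
  "prism f g T [] = 0"
| "prism f g T (x # xs) = T (f x # g x # map g xs) - prism f g (\<lambda>zs. T (f x # zs)) xs"

lemma prism_diff: "prism f g (\<lambda>zs. A zs - B zs) xs = prism f g A xs - prism f g B xs"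
  by (induction xs arbitrary: A B) (auto simp: algebra_simps)

lemma prism_additive:
  assumes "\<And>a b. M (a - b) = M a - M b"
  shows "M (prism f g T xs) = prism f g (\<lambda>zs. M (T zs)) xs"
proof -
  have M0: "M 0 = 0" using assms[of 0 0] by simp
  show ?thesis by (induction xs arbitrary: T) (simp_all add: M0 assms)
qed

lemma prism_cong:
  assumes "\<And>zs. length zs = Suc (length xs) \<Longrightarrow> set zs \<subseteq> f ` set xs \<union> g ` set xs \<Longrightarrow> T zs = T' zs"
  shows "prism f g T xs = prism f g T' xs"
  using assms
proof (induction xs arbitrary: T T')
  case (Cons x xs)
  have "T (f x # g x # map g xs) = T' (f x # g x # map g xs)"
    by (rule Cons.prems) auto
  moreover have "prism f g (\<lambda>zs. T (f x # zs)) xs = prism f g (\<lambda>zs. T' (f x # zs)) xs"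
    by (rule Cons.IH) (rule Cons.prems, auto)
  ultimately show ?case by simp
qed simp

lemma prism_eq_0:
  assumes "\<And>zs. length zs = Suc (length xs) \<Longrightarrow> set zs \<subseteq> f ` set xs \<union> g ` set xs \<Longrightarrow> T zs \<tau> = 0"
  shows "prism f g T xs \<tau> = 0"
  using assms
proof (induction xs arbitrary: T)
  case (Cons x xs)
  have "T (f x # g x # map g xs) \<tau> = 0"
    by (rule Cons.prems) auto
  moreover have "prism f g (\<lambda>zs. T (f x # zs)) xs \<tau> = 0"
    by (rule Cons.IH) (rule Cons.prems, auto)
  ultimately show ?case by simp
qed simp

lemma prism_formula:
  "xs \<noteq> [] \<Longrightarrow> prism f g (alt_faces T) xs + alt_faces (prism f g T) xs = T (map g xs) - T (map f xs)"
proof (induction xs arbitrary: T)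
  case (Cons x xs)
  show ?case
  proof (cases "xs = []")
    case False
    let ?T = "\<lambda>zs. T (f x # zs)" and ?T' = "\<lambda>zs. T (f x # g x # map g zs)"
    have "prism f g (alt_faces ?T) xs + alt_faces (prism f g ?T) xs = ?T (map g xs) - ?T (map f xs)"
      using Cons.IH[OF False] .
    moreover have "prism f g (alt_faces T) (x # xs)
        = alt_faces T (f x # g x # map g xs) - (prism f g T xs - prism f g (alt_faces ?T) xs)"
      using prism_diff[of f g T "alt_faces ?T" xs] by simp
    moreover have "alt_faces (prism f g T) (x # xs)
        = prism f g T xs - (alt_faces ?T' xs - alt_faces (prism f g ?T) xs)"
      using alt_faces_diff[of ?T' "prism f g ?T" xs] by simp
    moreover have "alt_faces T (f x # g x # map g xs)
        = T (g x # map g xs) - (T (f x # map g xs) - alt_faces ?T' xs)"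
      by (simp add: alt_faces_map)
    ultimately show ?thesis by (simp add: algebra_simps)
  qed simp
qed simp

definition chain_homotopy ::
  "'b::linorder set \<Rightarrow> ('b \<Rightarrow> 'a::linorder) \<Rightarrow> ('b \<Rightarrow> 'a) \<Rightarrow> ('b set \<Rightarrow> 'f) \<Rightarrow> ('a set \<Rightarrow> 'f::field)" where
  "chain_homotopy V f g = matrix_map (\<lambda>_. Pow V) (\<lambda>\<tau> \<sigma>. prism f g oriented (sorted_list_of_set \<sigma>) \<tau>)"

lemma chain_homotopy_lincomb:
  "chain_homotopy V f g (lincomb I a e) = lincomb I a (\<lambda>i. chain_homotopy V f g (e i))"
  by (simp add: chain_homotopy_def matrix_map_lincomb)

lemma chain_homotopy_diff:
  "chain_homotopy V f g (x - y) = chain_homotopy V f g x - chain_homotopy V f g y"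
  by (simp add: chain_homotopy_def matrix_map_diff)

lemma chain_homotopy_0: "chain_homotopy V f g 0 = 0"
  by (simp add: chain_homotopy_def matrix_map_0)

lemma chain_homotopy_oriented:
  assumes "finite V" "sorted zs" "distinct zs" "set zs \<subseteq> V"
  shows "chain_homotopy V f g (oriented zs) = (prism f g oriented zs :: 'a::linorder set \<Rightarrow> 'f::field)"
proof -
  have "chain_homotopy V f g (oriented (sorted_list_of_set (set zs)))
      = (prism f g oriented (sorted_list_of_set (set zs)) :: 'a set \<Rightarrow> 'f)"
    unfolding chain_homotopy_def matrix_map_oriented_sorted[OF assms(1,4)] ..
  with assms(2,3) show ?thesis by (simp add: sorted_list_of_set.idem_if_sorted_distinct)
qed

lemma bdry_chain_homotopy_oriented:
  fixes f g :: "'b::linorder \<Rightarrow> 'a::linorder"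
  assumes V: "finite V" "set xs \<subseteq> V" and xs: "sorted xs" "distinct xs" "length xs = Suc k"
    and K: "finite K" "set xs \<in> K" and L: "finite L"
    and contig: "\<And>\<tau>. \<tau> \<noteq> {} \<Longrightarrow> \<tau> \<subseteq> f ` set xs \<union> g ` set xs \<Longrightarrow> \<tau> \<in> L"
  shows "bdry L (k + 1) (chain_homotopy V f g (oriented xs)) + chain_homotopy V f g (bdry K k (oriented xs))
           = chain_map V g (oriented xs) - (chain_map V f (oriented xs) :: 'a set \<Rightarrow> 'f::field)"
proof -
  have "bdry L (k + 1) (chain_homotopy V f g (oriented xs))
      = bdry L (k + 1) (prism f g oriented xs :: 'a set \<Rightarrow> 'f)"
    by (simp add: chain_homotopy_oriented V xs)
  also have "\<dots> = prism f g (\<lambda>zs. bdry L (k + 1) (oriented zs)) xs"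
    by (rule prism_additive[of "bdry L (k + 1)"]) (rule bdry_diff)
  also have "\<dots> = prism f g (alt_faces oriented) xs"
  proof (rule prism_cong)
    fix zs :: "'a list" assume "length zs = Suc (length xs)" "set zs \<subseteq> f ` set xs \<union> g ` set xs"
    then show "bdry L (k + 1) (oriented zs) = (alt_faces oriented zs :: 'a set \<Rightarrow> 'f)"
      using xs by (intro bdry_oriented[OF L] contig) auto
  qed
  finally have bdry_homotopy: "bdry L (k + 1) (chain_homotopy V f g (oriented xs))
      = (prism f g (alt_faces oriented) xs :: 'a set \<Rightarrow> 'f)" .
  have "chain_homotopy V f g (bdry K k (oriented xs))
      = chain_homotopy V f g (alt_faces oriented xs :: 'b set \<Rightarrow> 'f)"
    by (simp add: bdry_oriented K xs)
  also have "\<dots> = alt_faces (\<lambda>zs. chain_homotopy V f g (oriented zs)) xs"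
    by (rule alt_faces_additive[of "chain_homotopy V f g"]) (rule chain_homotopy_diff)
  also have "\<dots> = alt_faces (prism f g oriented) xs"
    by (intro alt_faces_cong chain_homotopy_oriented[OF V(1)])
       (simp_all add: sorted_remove_nth distinct_remove_nth xs subset_trans[OF set_remove_nth_subset V(2)])
  finally have homotopy_bdry: "chain_homotopy V f g (bdry K k (oriented xs))
      = (alt_faces (prism f g oriented) xs :: 'a set \<Rightarrow> 'f)" .
  have "bdry L (k + 1) (chain_homotopy V f g (oriented xs))
        + chain_homotopy V f g (bdry K k (oriented xs))
      = prism f g (alt_faces oriented) xs + (alt_faces (prism f g oriented) xs :: 'a set \<Rightarrow> 'f)"
    by (simp only: bdry_homotopy homotopy_bdry)
  also have "\<dots> = oriented (map g xs) - oriented (map f xs)"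
    using xs by (intro prism_formula) auto
  also have "\<dots> = chain_map V g (oriented xs) - chain_map V f (oriented xs)"
    by (simp add: chain_map_oriented V)
  finally show ?thesis .
qed

lemma bdry_chain_homotopy:
  fixes f g :: "'b::linorder \<Rightarrow> 'a::linorder" and c :: "'b set \<Rightarrow> 'f::field"
  assumes V: "finite V" and K: "K \<subseteq> Pow V" and L: "finite L"
    and contig: "\<And>\<sigma> \<tau>. \<sigma> \<in> K \<Longrightarrow> \<tau> \<noteq> {} \<Longrightarrow> \<tau> \<subseteq> f ` \<sigma> \<union> g ` \<sigma> \<Longrightarrow> \<tau> \<in> L"
    and c: "c \<in> chains K k"
  shows "bdry L (k + 1) (chain_homotopy V f g c) + chain_homotopy V f g (bdry K k c)
           = chain_map V g c - chain_map V f c"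
proof -
  have fK: "finite K" using K V by (meson finite_Pow_iff finite_subset)
  have ce: "c = lincomb K c (\<lambda>\<sigma>. oriented (sorted_list_of_set \<sigma>))"
    by (rule lincomb_oriented_expand) (use c K V fK in \<open>auto simp: chains_def intro: finite_subset\<close>)
  have "bdry L (k + 1) (chain_homotopy V f g c) + chain_homotopy V f g (bdry K k c)
      = lincomb K c (\<lambda>\<sigma>. bdry L (k + 1) (chain_homotopy V f g (oriented (sorted_list_of_set \<sigma>)))
                        + chain_homotopy V f g (bdry K k (oriented (sorted_list_of_set \<sigma>))))"
    by (subst (1 2) ce) (simp add: chain_homotopy_lincomb bdry_lincomb lincomb_add)
  also have "\<dots> = lincomb K c (\<lambda>\<sigma>. chain_map V g (oriented (sorted_list_of_set \<sigma>))
                                  - chain_map V f (oriented (sorted_list_of_set \<sigma>)))"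
  proof (rule lincomb_cong)
    fix \<sigma> assume \<sigma>: "\<sigma> \<in> K" "c \<sigma> \<noteq> 0"
    then have "finite \<sigma>" "\<sigma> \<subseteq> V" "card \<sigma> = Suc k" using c K V by (auto simp: chains_def)
    then show "bdry L (k + 1) (chain_homotopy V f g (oriented (sorted_list_of_set \<sigma>)))
          + chain_homotopy V f g (bdry K k (oriented (sorted_list_of_set \<sigma>)))
        = chain_map V g (oriented (sorted_list_of_set \<sigma>))
          - chain_map V f (oriented (sorted_list_of_set \<sigma>))"
      by (intro bdry_chain_homotopy_oriented contig[OF \<sigma>(1)]) (simp_all add: V fK L \<sigma>(1))
  qed
  also have "\<dots> = chain_map V g c - chain_map V f c"
    by (subst (2 3) ce) (simp add: chain_map_lincomb lincomb_diff)
  finally show ?thesis .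
qed

lemma chain_homotopy_chains:
  fixes f g :: "'b::linorder \<Rightarrow> 'a::linorder" and c :: "'b set \<Rightarrow> 'f::field"
  assumes contig: "\<And>\<sigma> \<tau>. \<sigma> \<in> K \<Longrightarrow> \<tau> \<noteq> {} \<Longrightarrow> \<tau> \<subseteq> f ` \<sigma> \<union> g ` \<sigma> \<Longrightarrow> \<tau> \<in> L"
    and c: "c \<in> chains K k"
  shows "chain_homotopy V f g c \<in> chains L (k + 1)"
  unfolding chains_def
proof (intro CollectI allI impI)
  fix \<tau> assume "chain_homotopy V f g c \<tau> \<noteq> 0"
  then obtain \<sigma> where "prism f g oriented (sorted_list_of_set \<sigma>) \<tau> \<noteq> (0 :: 'f)" "c \<sigma> \<noteq> 0"
    unfolding chain_homotopy_def by (rule matrix_map_nonzero)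
  moreover from this(2) have \<sigma>: "\<sigma> \<in> K" "card \<sigma> = k + 1" "finite \<sigma>"
    using c by (auto simp: chains_def)
  ultimately obtain zs where zs: "length zs = Suc (card \<sigma>)" "set zs \<subseteq> f ` \<sigma> \<union> g ` \<sigma>"
      "oriented zs \<tau> \<noteq> (0 :: 'f)"
    using prism_eq_0[of "sorted_list_of_set \<sigma>" f g oriented \<tau>] by auto
  then have "distinct zs" "\<tau> = set zs" by (auto simp: oriented_def split: if_splits)
  with zs \<sigma> show "\<tau> \<in> L \<and> finite \<tau> \<and> card \<tau> = k + 1 + 1"
    by (auto simp: distinct_card intro: contig)
qed

text \<open>Only the empty simplex can be a boundary in degree \<open>0\<close>, and the prism over it vanishes.\<close>
lemma chain_homotopy_bdry_0: "chain_homotopy V f g (bdry K 0 c) = 0"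
proof -
  have z: "prism f g oriented (sorted_list_of_set \<sigma>) \<tau> * bdry K 0 c \<sigma> = 0" for \<sigma> \<tau>
    by (cases "finite \<sigma> \<and> card \<sigma> = 0") (auto simp: bdry_def)
  show ?thesis unfolding chain_homotopy_def matrix_map_def by (simp add: fun_eq_iff z)
qed

section \<open>Ranks of maps induced in homology\<close>

context vector_space_pair
begin

text \<open>Under these hypotheses \<open>V/B'\<close> is spanned by the image of \<open>W/B\<close> under \<open>G\<close>.\<close>
lemma dim_diff_le_of_span_image:
  assumes G: "Vector_Spaces.linear s1 s2 G"
    and W: "W \<subseteq> vs1.span E" "finite E" and B': "B' \<subseteq> vs2.span E'" "finite E'"
    and BW: "B \<subseteq> W" and GB: "G ` B \<subseteq> vs2.span B'" and V: "V \<subseteq> vs2.span (G ` W \<union> B')"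
  shows "vs2.dim V - vs2.dim B' \<le> vs1.dim W - vs1.dim B"
proof -
  obtain Bb where Bb: "Bb \<subseteq> B" "vs1.independent Bb" "B \<subseteq> vs1.span Bb" "card Bb = vs1.dim B"
    by (rule vs1.basis_exists)
  obtain Wb where Wb: "Bb \<subseteq> Wb" "Wb \<subseteq> W" "vs1.independent Wb" "W \<subseteq> vs1.span Wb"
    using vs1.maximal_independent_subset_extend[of Bb W] Bb BW by blast
  have fWb: "finite Wb" using vs1.independent_span_bound[OF W(2) Wb(3)] Wb(2) W(1) by blast
  have cWb: "card Wb = vs1.dim W" by (rule vs1.basis_card_eq_dim[OF Wb(2) Wb(4) Wb(3)])
  obtain Bb' where Bb': "Bb' \<subseteq> B'" "vs2.independent Bb'" "B' \<subseteq> vs2.span Bb'" "card Bb' = vs2.dim B'"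
    by (rule vs2.basis_exists)
  have fBb': "finite Bb'" using vs2.independent_span_bound[OF B'(2) Bb'(2)] Bb'(1) B'(1) by blast
  define R where "R = Wb - Bb"
  let ?S = "vs2.span (G ` R \<union> Bb')"
  have B'S: "vs2.span B' \<subseteq> ?S"
    using Bb'(3) by (metis sup.cobounded2 vs2.span_mono vs2.span_minimal vs2.subspace_span order_trans)
  have "G ` Wb \<subseteq> ?S"
  proof
    fix y assume "y \<in> G ` Wb"
    then obtain w where w: "w \<in> Wb" "y = G w" by blast
    show "y \<in> ?S"
    proof (cases "w \<in> Bb")
      case True
      then show ?thesis using w Bb(1) GB B'S by blast
    next
      case False
      then show ?thesis using w unfolding R_def by (blast intro: vs2.span_base)
    qed
  qed
  then have "vs2.span (G ` Wb) \<subseteq> ?S" by (rule vs2.span_minimal) (rule vs2.subspace_span)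
  moreover have "G ` W \<subseteq> vs2.span (G ` Wb)"
    using Wb(4) module_hom.span_image[of s1 s2 G Wb] G by (auto simp: Vector_Spaces.linear_def)
  ultimately have "vs2.span (G ` W \<union> B') \<subseteq> ?S"
    using B'S vs2.span_superset by (intro vs2.span_minimal vs2.subspace_span) blast
  then have "vs2.dim V \<le> card (G ` R \<union> Bb')"
    using V by (intro vs2.dim_le_card) (auto simp: R_def fWb fBb')
  also have "\<dots> \<le> card R + card Bb'"
    using card_Un_le card_image_le[of R G] fWb unfolding R_def
    by (meson add_right_mono finite_Diff order_trans)
  finally have "vs2.dim V \<le> card R + vs2.dim B'" using Bb'(4) by simp
  moreover have "card R = vs1.dim W - vs1.dim B"
    unfolding R_def using Wb(1) fWb Bb(4) cWb by (simp add: card_Diff_subset finite_subset)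
  ultimately show ?thesis by linarith
qed

end

lemma vector_space_pair_fscale:
  "vector_space_pair (fscale :: 'f::field \<Rightarrow> ('a set \<Rightarrow> 'f) \<Rightarrow> _) (fscale :: 'f \<Rightarrow> ('b set \<Rightarrow> 'f) \<Rightarrow> _)"
  unfolding vector_space_pair_def by (simp add: vector_space_fscale)

lemma in_span_oriented:
  fixes c :: "'a::linorder set \<Rightarrow> 'f::field"
  assumes V: "finite V" and c: "\<And>\<sigma>. c \<sigma> \<noteq> 0 \<Longrightarrow> \<sigma> \<subseteq> V"
  shows "c \<in> module.span fscale ((\<lambda>\<sigma>. oriented (sorted_list_of_set \<sigma>)) ` Pow V)"
proof -
  interpret vector_space "fscale :: 'f \<Rightarrow> ('a set \<Rightarrow> 'f) \<Rightarrow> _" by (rule vector_space_fscale)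
  have "c = lincomb (Pow V) c (\<lambda>\<sigma>. oriented (sorted_list_of_set \<sigma>))"
    by (rule lincomb_oriented_expand_Pow[OF V c])
  also have "\<dots> = (\<Sum>\<sigma>\<in>Pow V. fscale (c \<sigma>) (oriented (sorted_list_of_set \<sigma>)))"
    unfolding lincomb_def fscale_def by (rule ext) (simp add: sum_fun_apply)
  also have "\<dots> \<in> span ((\<lambda>\<sigma>. oriented (sorted_list_of_set \<sigma>)) ` Pow V)"
    by (intro span_sum span_scale span_base) auto
  finally show ?thesis .
qed

lemma bdry_support:
  assumes "bdry L k c \<tau> \<noteq> 0" "L \<subseteq> Pow V"
  shows "\<tau> \<subseteq> V"
proof -
  obtain \<sigma> where "\<sigma> \<in> L" "\<tau> \<subset> \<sigma>"
    using assms(1) unfolding bdry_eq_matrix_map by (rule matrix_map_nonzero) auto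
  with assms(2) show ?thesis by auto
qed

lemma boundaries_support:
  assumes "b \<in> boundaries L k" "L \<subseteq> Pow V" "b \<tau> \<noteq> 0"
  shows "\<tau> \<subseteq> V"
proof -
  obtain c where "b = bdry L (k + 1) c" using assms(1) unfolding boundaries_def by blast
  with assms(2,3) show ?thesis using bdry_support by metis
qed

lemma zero_in_cycles: "0 \<in> cycles K k"
  by (simp add: cycles_def chains_def bdry_zero)

lemma zero_in_boundaries: "0 \<in> boundaries L k"
  unfolding boundaries_def using bdry_zero[of L "k + 1"] by (force simp: chains_def)

lemma chain_map_cycles:
  fixes g :: "'b::linorder \<Rightarrow> 'a::linorder" and z :: "'b set \<Rightarrow> 'f::field"
  assumes V: "finite V" and K: "K \<subseteq> Pow V" and L: "finite L"
    and simpl: "\<And>\<sigma>. \<sigma> \<in> K \<Longrightarrow> g ` \<sigma> \<in> L" and z: "z \<in> cycles K k"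
  shows "chain_map V g z \<in> cycles L k"
proof -
  have zc: "z \<in> chains K k" and "k = 0 \<or> bdry K k z = 0" using z by (auto simp: cycles_def)
  then have "k = 0 \<or> bdry L k (chain_map V g z) = 0"
    using bdry_chain_map[OF V K L simpl zc] by (auto simp: chain_map_0)
  with chain_map_chains[OF K simpl zc] show ?thesis by (simp add: cycles_def)
qed

lemma chain_map_boundaries:
  fixes g :: "'b::linorder \<Rightarrow> 'a::linorder" and b :: "'b set \<Rightarrow> 'f::field"
  assumes V: "finite V" and K: "K \<subseteq> Pow V" and L: "finite L"
    and simpl: "\<And>\<sigma>. \<sigma> \<in> K \<Longrightarrow> g ` \<sigma> \<in> L" and b: "b \<in> boundaries K k"
  shows "chain_map V g b \<in> boundaries L k"
proof -
  obtain c where c: "c \<in> chains K (k + 1)" "b = bdry K (k + 1) c"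
    using b unfolding boundaries_def by blast
  then have "chain_map V g b = bdry L (k + 1) (chain_map V g c)"
    using bdry_chain_map[OF V K L simpl c(1)] by simp
  with chain_map_chains[OF K simpl c(1)] show ?thesis unfolding boundaries_def by blast
qed

lemma chain_map_contiguous_diff_boundary:
  fixes f g :: "'b::linorder \<Rightarrow> 'a::linorder" and z :: "'b set \<Rightarrow> 'f::field"
  assumes V: "finite V" and K: "K \<subseteq> Pow V" and L: "finite L"
    and contig: "\<And>\<sigma> \<tau>. \<sigma> \<in> K \<Longrightarrow> \<tau> \<noteq> {} \<Longrightarrow> \<tau> \<subseteq> f ` \<sigma> \<union> g ` \<sigma> \<Longrightarrow> \<tau> \<in> L"
    and z: "z \<in> cycles K k"
  shows "chain_map V g z - chain_map V f z \<in> boundaries L k"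
proof -
  have zc: "z \<in> chains K k" using z by (simp add: cycles_def)
  have "chain_homotopy V f g (bdry K k z) = 0"
    using z chain_homotopy_bdry_0 by (auto simp: cycles_def chain_homotopy_0)
  then have "chain_map V g z - chain_map V f z = bdry L (k + 1) (chain_homotopy V f g z)"
    using bdry_chain_homotopy[where f=f and g=g, OF V K L contig zc] by simp
  moreover have "chain_homotopy V f g z \<in> chains L (k + 1)"
    using contig zc by (rule chain_homotopy_chains)
  ultimately show ?thesis unfolding boundaries_def by blast
qed

definition cycles_plus_boundaries ::
  "'a::linorder set set \<Rightarrow> 'a set set \<Rightarrow> nat \<Rightarrow> ('a set \<Rightarrow> 'f::field) set" where
  "cycles_plus_boundaries K L k = {z + b | z b. z \<in> cycles K k \<and> b \<in> boundaries L k}"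

lemma hom_rank_eq_dim:
  "hom_rank TYPE('f::field) K L k
     = vector_space.dim fscale (cycles_plus_boundaries K L k :: ('a::linorder set \<Rightarrow> 'f) set)
       - vector_space.dim fscale (boundaries L k :: ('a set \<Rightarrow> 'f) set)"
  by (simp add: hom_rank_def cycles_plus_boundaries_def)

lemma boundaries_subset_cycles_plus_boundaries: "boundaries L k \<subseteq> cycles_plus_boundaries K L k"
proof
  fix b assume "b \<in> boundaries L k"
  then have "b = 0 + b \<and> 0 \<in> cycles K k \<and> b \<in> boundaries L k" using zero_in_cycles by simp
  then show "b \<in> cycles_plus_boundaries K L k" unfolding cycles_plus_boundaries_def by blast
qed

lemma cycles_subset_cycles_plus_boundaries: "cycles K k \<subseteq> cycles_plus_boundaries K L k"
proof
  fix z assume "z \<in> cycles K k"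
  then have "z = z + 0 \<and> z \<in> cycles K k \<and> 0 \<in> boundaries L k" using zero_in_boundaries by simp
  then show "z \<in> cycles_plus_boundaries K L k" unfolding cycles_plus_boundaries_def by blast
qed

lemma cycles_plus_boundaries_support:
  assumes "w \<in> cycles_plus_boundaries K L k" "K \<subseteq> Pow V" "L \<subseteq> Pow V" "w \<sigma> \<noteq> 0"
  shows "\<sigma> \<subseteq> V"
proof -
  obtain z b where zb: "w = z + b" "z \<in> chains K k" "b \<in> boundaries L k"
    using assms(1) unfolding cycles_plus_boundaries_def cycles_def by blast
  then have "z \<sigma> \<noteq> 0 \<or> b \<sigma> \<noteq> 0" using assms(4) by auto
  then show ?thesis using chains_support[OF zb(2) assms(2)] boundaries_support[OF zb(3) assms(3)] by blast
qed

text \<open>The key step: modulo \<open>B\<^sub>k(L\<^sub>Y)\<close>, every cycle \<open>z\<close> of \<open>K\<^sub>Y\<close> equals \<open>g\<^sub>#(f\<^sub>#z)\<close>, because \<open>g \<circ> f\<close> is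
  contiguous to the identity in \<open>L\<^sub>Y\<close>; and \<open>f\<^sub>#z\<close> is a cycle of \<open>K\<^sub>X\<close>.\<close>
lemma cycles_plus_boundaries_factor:
  fixes X :: "'a::linorder set" and Y :: "'b::linorder set" and f :: "'b \<Rightarrow> 'a" and g :: "'a \<Rightarrow> 'b"
  assumes X: "finite X" and Y: "finite Y" and fY: "f ` Y \<subseteq> X"
    and KY: "KY \<subseteq> Pow Y" and LY: "finite LY" and KX: "finite KX"
    and fK: "\<And>\<sigma>. \<sigma> \<in> KY \<Longrightarrow> f ` \<sigma> \<in> KX"
    and contig: "\<And>\<sigma> \<tau>. \<sigma> \<in> KY \<Longrightarrow> \<tau> \<noteq> {} \<Longrightarrow> \<tau> \<subseteq> \<sigma> \<union> (g \<circ> f) ` \<sigma> \<Longrightarrow> \<tau> \<in> LY"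
    and v: "v \<in> (cycles_plus_boundaries KY LY k :: ('b set \<Rightarrow> 'f::field) set)"
  shows "v \<in> module.span fscale (chain_map X g ` cycles_plus_boundaries KX LX k \<union> boundaries LY k)"
proof -
  interpret vector_space "fscale :: 'f \<Rightarrow> ('b set \<Rightarrow> 'f) \<Rightarrow> _" by (rule vector_space_fscale)
  let ?S = "chain_map X g ` cycles_plus_boundaries KX LX k \<union> boundaries LY k"
    and ?F = "chain_map Y f :: ('b set \<Rightarrow> 'f) \<Rightarrow> ('a set \<Rightarrow> 'f)"
  obtain z b where zb: "v = z + b" "z \<in> cycles KY k" "b \<in> boundaries LY k"
    using v unfolding cycles_plus_boundaries_def by blast
  have z: "\<And>\<sigma>. z \<sigma> \<noteq> 0 \<Longrightarrow> \<sigma> \<subseteq> Y" using zb(2) KY by (auto simp: cycles_def chains_def)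
  have "?F z \<in> cycles_plus_boundaries KX LX k"
    using chain_map_cycles[OF Y KY KX fK zb(2)] cycles_subset_cycles_plus_boundaries by blast
  then have "chain_map X g (?F z) \<in> span ?S" by (blast intro: span_base)
  moreover have "chain_map Y id z - chain_map Y (g \<circ> f) z \<in> boundaries LY k"
    using Y KY LY _ zb(2) by (rule chain_map_contiguous_diff_boundary) (simp add: contig Un_commute)
  then have "z - chain_map X g (?F z) \<in> span ?S"
    by (simp add: chain_map_comp[OF Y X fY z] chain_map_id[OF Y z] span_base)
  moreover have "b \<in> span ?S" using zb(3) by (blast intro: span_base)
  ultimately have "chain_map X g (?F z) + (z - chain_map X g (?F z)) + b \<in> span ?S"
    by (intro span_add)
  then show ?thesis using zb(1) by simp
qed

text \<open>The map \<open>H\<^sub>k(K\<^sub>Y) \<rightarrow> H\<^sub>k(L\<^sub>Y)\<close> factors, up to the contiguity of \<open>g \<circ> f\<close> with the identity,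
  through \<open>H\<^sub>k(K\<^sub>X) \<rightarrow> H\<^sub>k(L\<^sub>X)\<close>.\<close>
lemma hom_rank_le_factor:
  fixes X :: "'a::linorder set" and Y :: "'b::linorder set" and f :: "'b \<Rightarrow> 'a" and g :: "'a \<Rightarrow> 'b"
  assumes X: "finite X" and Y: "finite Y" and fY: "f ` Y \<subseteq> X" and gX: "g ` X \<subseteq> Y"
    and KY: "KY \<subseteq> Pow Y" and LY: "LY \<subseteq> Pow Y" and KX: "KX \<subseteq> Pow X" and LX: "LX \<subseteq> Pow X"
    and fK: "\<And>\<sigma>. \<sigma> \<in> KY \<Longrightarrow> f ` \<sigma> \<in> KX" and gL: "\<And>\<sigma>. \<sigma> \<in> LX \<Longrightarrow> g ` \<sigma> \<in> LY" and KL: "KX \<subseteq> LX"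
    and contig: "\<And>\<sigma> \<tau>. \<sigma> \<in> KY \<Longrightarrow> \<tau> \<noteq> {} \<Longrightarrow> \<tau> \<subseteq> \<sigma> \<union> (g \<circ> f) ` \<sigma> \<Longrightarrow> \<tau> \<in> LY"
  shows "hom_rank TYPE('f::field) KY LY k \<le> hom_rank TYPE('f) KX LX k"
proof -
  interpret vsp: vector_space_pair "fscale :: 'f \<Rightarrow> ('a set \<Rightarrow> 'f) \<Rightarrow> _" "fscale :: 'f \<Rightarrow> ('b set \<Rightarrow> 'f) \<Rightarrow> _"
    by (rule vector_space_pair_fscale)
  have fin: "finite KX" "finite LY" using KX LY X Y by (meson finite_Pow_iff finite_subset)+
  show ?thesis
    unfolding hom_rank_eq_dim
  proof (rule vsp.dim_diff_le_of_span_image[OF linear_chain_map])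
    show "cycles_plus_boundaries KX LX k \<subseteq> vsp.vs1.span ((\<lambda>\<sigma>. oriented (sorted_list_of_set \<sigma>)) ` Pow X)"
      using X KX LX cycles_plus_boundaries_support by (blast intro: in_span_oriented)
    show "boundaries LY k \<subseteq> vsp.vs2.span ((\<lambda>\<sigma>. oriented (sorted_list_of_set \<sigma>)) ` Pow Y)"
      using Y LY boundaries_support by (blast intro: in_span_oriented)
    show "chain_map X g ` boundaries LX k \<subseteq> vsp.vs2.span (boundaries LY k)"
      using chain_map_boundaries[OF X LX fin(2) gL] by (blast intro: vsp.vs2.span_base)
    show "cycles_plus_boundaries KY LY k
        \<subseteq> vsp.vs2.span (chain_map X g ` cycles_plus_boundaries KX LX k \<union> boundaries LY k)"
    proof
      fix v :: "'b set \<Rightarrow> 'f" assume "v \<in> cycles_plus_boundaries KY LY k"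
      with X Y fY KY fin(2,1) fK contig
      show "v \<in> vsp.vs2.span (chain_map X g ` cycles_plus_boundaries KX LX k \<union> boundaries LY k)"
        by (rule cycles_plus_boundaries_factor)
    qed
  qed (simp_all add: X Y boundaries_subset_cycles_plus_boundaries)
qed

section \<open>Dynamic metric spaces and Rips complexes\<close>

lemma is_DMS_D:
  assumes "is_DMS X d"
  shows "finite X"
    and "x \<in> X \<Longrightarrow> y \<in> X \<Longrightarrow> d t x y \<ge> 0"
    and "x \<in> X \<Longrightarrow> y \<in> X \<Longrightarrow> d t x y = d t y x"
    and "x \<in> X \<Longrightarrow> y \<in> X \<Longrightarrow> continuous_on UNIV (\<lambda>t. d t x y)"
  using assms unfolding is_DMS_def is_pseudometric_on_def by blast+

lemma vee_attained:
  assumes D: "is_DMS X d" and xy: "x \<in> X" "y \<in> X" and ab: "a \<le> b"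
  obtains t where "t \<in> {a..b}" "vee d a b x y = d t x y"
proof -
  have "continuous_on {a..b} (\<lambda>t. d t x y)"
    using is_DMS_D(4)[OF D xy] by (rule continuous_on_subset) simp
  then obtain t where t: "t \<in> {a..b}" "\<forall>s\<in>{a..b}. d t x y \<le> d s x y"
    using continuous_attains_inf[of "{a..b}" "\<lambda>t. d t x y"] ab by auto
  have "vee d a b x y = d t x y"
    unfolding vee_def by (rule cInf_eq_minimum) (use t in auto)
  with t that show ?thesis by blast
qed

lemma vee_le:
  assumes D: "is_DMS X d" and xy: "x \<in> X" "y \<in> X" and t: "t \<in> {a..b}"
  shows "vee d a b x y \<le> d t x y"
  unfolding vee_def
proof (rule cInf_lower)
  show "d t x y \<in> (\<lambda>s. d s x y) ` {a..b}" using t by blast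
  show "bdd_below ((\<lambda>s. d s x y) ` {a..b})"
    using is_DMS_D(2)[OF D xy] by (intro bdd_belowI[of _ 0]) auto
qed

lemma vee_antimono:
  assumes D: "is_DMS X d" and xy: "x \<in> X" "y \<in> X" and "a \<le> b" "a' \<le> a" "b \<le> b'"
  shows "vee d a' b' x y \<le> vee d a b x y"
proof -
  obtain t where t: "t \<in> {a..b}" "vee d a b x y = d t x y" using vee_attained[OF D xy \<open>a \<le> b\<close>] .
  have "t \<in> {a'..b'}" using t assms by auto
  then show ?thesis using vee_le[OF D xy] t by simp
qed

lemma vee_sym:
  assumes D: "is_DMS X d" and xy: "x \<in> X" "y \<in> X"
  shows "vee d a b x y = vee d a b y x"
  unfolding vee_def using is_DMS_D(3)[OF D xy] by simp

lemma vee_transfer: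
  assumes DX: "is_DMS X dX" and DY: "is_DMS Y dY"
    and uv: "u \<in> X" "v \<in> X" and yy': "y \<in> Y" "y' \<in> Y" and "e \<ge> 0"
    and close: "\<And>t. vee dX (t - e) (t + e) u v \<le> dY t y y' + 2 * e"
    and bound: "vee dY lo hi y y' \<le> \<delta>" and "lo \<le> hi"
    and widen: "lo' \<le> lo - e" "hi + e \<le> hi'" "\<delta> + 2 * e \<le> \<delta>'"
  shows "vee dX lo' hi' u v \<le> \<delta>'"
proof -
  obtain t where t: "t \<in> {lo..hi}" "vee dY lo hi y y' = dY t y y'"
    using vee_attained[OF DY yy' \<open>lo \<le> hi\<close>] .
  have "vee dX lo' hi' u v \<le> vee dX (t - e) (t + e) u v"
    by (rule vee_antimono[OF DX uv]) (use t widen \<open>e \<ge> 0\<close> in auto)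
  also have "\<dots> \<le> dY t y y' + 2 * e" by (rule close)
  finally show ?thesis using t bound widen by simp
qed

lemma eps_tripod_sym: "eps_tripod X dX Y dY Z phiX phiY e \<Longrightarrow> eps_tripod Y dY X dX Z phiY phiX e"
  unfolding eps_tripod_def by blast

lemma rips_image:
  assumes fX: "f ` X \<subseteq> X'"
    and f: "\<And>x x'. x \<in> X \<Longrightarrow> x' \<in> X \<Longrightarrow> d x x' \<le> \<delta> \<Longrightarrow> d' (f x) (f x') \<le> \<delta>'"
    and \<sigma>: "\<sigma> \<in> rips X d \<delta>"
  shows "f ` \<sigma> \<in> rips X' d' \<delta>'"
proof -
  have "\<sigma> \<noteq> {}" "\<sigma> \<subseteq> X" "\<forall>x\<in>\<sigma>. \<forall>x'\<in>\<sigma>. d x x' \<le> \<delta>"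
    using \<sigma> unfolding rips_def by auto
  with fX f show ?thesis unfolding rips_def by (simp add: subset_iff) blast
qed

lemma rips_mono:
  assumes "\<And>x x'. x \<in> X \<Longrightarrow> x' \<in> X \<Longrightarrow> d' x x' \<le> d x x'" and "\<delta> \<le> \<delta>'"
  shows "rips X d \<delta> \<subseteq> rips X d' \<delta>'"
proof
  fix \<sigma> assume "\<sigma> \<in> rips X d \<delta>"
  then have \<sigma>: "\<sigma> \<noteq> {}" "\<sigma> \<subseteq> X" "\<forall>x\<in>\<sigma>. \<forall>x'\<in>\<sigma>. d x x' \<le> \<delta>"
    unfolding rips_def by auto
  moreover have "d' x x' \<le> \<delta>'" if "x \<in> \<sigma>" "x' \<in> \<sigma>" for x x'
    using assms(1)[of x x'] assms(2) \<sigma> that by fastforce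
  ultimately show "\<sigma> \<in> rips X d' \<delta>'" unfolding rips_def by blast
qed

lemma rips_subset_Un_image:
  assumes sym: "\<And>x x'. x \<in> X \<Longrightarrow> x' \<in> X \<Longrightarrow> d x x' = d x' x"
    and \<sigma>: "\<sigma> \<in> rips X d \<delta>" and h\<sigma>: "h ` \<sigma> \<in> rips X d \<delta>"
    and mixed: "\<And>x x'. x \<in> \<sigma> \<Longrightarrow> x' \<in> \<sigma> \<Longrightarrow> d x (h x') \<le> \<delta>"
    and \<tau>: "\<tau> \<noteq> {}" "\<tau> \<subseteq> \<sigma> \<union> h ` \<sigma>"
  shows "\<tau> \<in> rips X d \<delta>"
proof -
  have \<sigma>X: "\<sigma> \<subseteq> X" and h\<sigma>X: "h ` \<sigma> \<subseteq> X"
    and d\<sigma>: "\<And>x x'. x \<in> \<sigma> \<Longrightarrow> x' \<in> \<sigma> \<Longrightarrow> d x x' \<le> \<delta>"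
    and dh\<sigma>: "\<And>x x'. x \<in> \<sigma> \<Longrightarrow> x' \<in> \<sigma> \<Longrightarrow> d (h x) (h x') \<le> \<delta>"
    using \<sigma> h\<sigma> unfolding rips_def by auto
  have "d u u' \<le> \<delta>" if "u \<in> \<sigma> \<union> h ` \<sigma>" "u' \<in> \<sigma> \<union> h ` \<sigma>" for u u'
  proof -
    have "d (h x) x' \<le> \<delta>" if "x \<in> \<sigma>" "x' \<in> \<sigma>" for x x'
    proof -
      have "h x \<in> X" "x' \<in> X" using \<sigma>X h\<sigma>X that by auto
      then show ?thesis using mixed[OF that(2,1)] sym[of x' "h x"] by simp
    qed
    with that d\<sigma> dh\<sigma> mixed show ?thesis by (elim UnE imageE) simp_all
  qed
  moreover have "\<tau> \<subseteq> X" using \<tau> \<sigma>X h\<sigma>X by blast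
  ultimately show ?thesis using \<tau> unfolding rips_def by (simp add: subset_iff)
qed

text \<open>The maps \<open>f : Y \<rightarrow> X\<close> and \<open>g : X \<rightarrow> Y\<close> obtained from an \<open>e\<close>-tripod by choosing preimages;
  the last inequality compares \<open>y\<close> and \<open>g x\<close> through the pair \<open>f y\<close>, \<open>x\<close>.\<close>
locale tripod_maps =
  fixes X :: "'a set" and dX :: "real \<Rightarrow> 'a \<Rightarrow> 'a \<Rightarrow> real"
    and Y :: "'b set" and dY :: "real \<Rightarrow> 'b \<Rightarrow> 'b \<Rightarrow> real"
    and e :: real and f :: "'b \<Rightarrow> 'a" and g :: "'a \<Rightarrow> 'b"
  assumes DX: "is_DMS X dX" and DY: "is_DMS Y dY" and e_nonneg: "e \<ge> 0"
    and f_into: "y \<in> Y \<Longrightarrow> f y \<in> X" and g_into: "x \<in> X \<Longrightarrow> g x \<in> Y"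
    and f_dist: "y \<in> Y \<Longrightarrow> y' \<in> Y \<Longrightarrow> vee dX (t - e) (t + e) (f y) (f y') \<le> dY t y y' + 2 * e"
    and g_dist: "x \<in> X \<Longrightarrow> x' \<in> X \<Longrightarrow> vee dY (t - e) (t + e) (g x) (g x') \<le> dX t x x' + 2 * e"
    and fg_dist: "y \<in> Y \<Longrightarrow> x \<in> X \<Longrightarrow> vee dY (t - e) (t + e) y (g x) \<le> dX t (f y) x + 2 * e"
begin

lemma f_image_rips:
  assumes "\<sigma> \<in> rips Y (vee dY lo hi) \<delta>" "lo \<le> hi" "lo' \<le> lo - e" "hi + e \<le> hi'" "\<delta> + 2 * e \<le> \<delta>'"
  shows "f ` \<sigma> \<in> rips X (vee dX lo' hi') \<delta>'"
  using f_into assms(1)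
  by (intro rips_image vee_transfer[OF DX DY f_into f_into _ _ e_nonneg f_dist]) (use assms in auto)

lemma g_image_rips:
  assumes "\<sigma> \<in> rips X (vee dX lo hi) \<delta>" "lo \<le> hi" "lo' \<le> lo - e" "hi + e \<le> hi'" "\<delta> + 2 * e \<le> \<delta>'"
  shows "g ` \<sigma> \<in> rips Y (vee dY lo' hi') \<delta>'"
  using g_into assms(1)
  by (intro rips_image vee_transfer[OF DY DX g_into g_into _ _ e_nonneg g_dist]) (use assms in auto)

lemma vee_g_f_le:
  assumes yy': "y \<in> Y" "y' \<in> Y" and "vee dY lo hi y y' \<le> \<delta>" "lo \<le> hi"
    and "lo' \<le> lo - 2 * e" "hi + 2 * e \<le> hi'" "\<delta> + 4 * e \<le> \<delta>'"
  shows "vee dY lo' hi' y (g (f y')) \<le> \<delta>'"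
proof -
  have fy: "f y \<in> X" "f y' \<in> X" using f_into yy' by auto
  have "vee dX (lo - e) (hi + e) (f y) (f y') \<le> \<delta> + 2 * e"
    by (rule vee_transfer[OF DX DY fy yy' e_nonneg f_dist[OF yy'] assms(3,4)]) simp_all
  then show ?thesis
    by (rule vee_transfer[OF DY DX yy'(1) g_into[OF fy(2)] fy e_nonneg fg_dist[OF yy'(1) fy(2)]])
       (use assms e_nonneg in auto)
qed

end

lemma eps_tripod_obtain_maps:
  assumes "is_DMS X dX" "is_DMS Y dY" "e \<ge> 0" and T: "eps_tripod X dX Y dY Z phiX phiY e"
  obtains f g where "tripod_maps X dX Y dY e f g"
proof -
  have onto: "phiX ` Z = X" "phiY ` Z = Y"
    and dist: "\<And>t z z'. z \<in> Z \<Longrightarrow> z' \<in> Z \<Longrightarrow>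
        vee dX (t - e) (t + e) (phiX z) (phiX z') \<le> dY t (phiY z) (phiY z') + 2 * e \<and>
        vee dY (t - e) (t + e) (phiY z) (phiY z') \<le> dX t (phiX z) (phiX z') + 2 * e"
    using T unfolding eps_tripod_def by blast+
  define sY where "sY y = (SOME z. z \<in> Z \<and> phiY z = y)" for y
  define sX where "sX x = (SOME z. z \<in> Z \<and> phiX z = x)" for x
  have sY: "sY y \<in> Z \<and> phiY (sY y) = y" if "y \<in> Y" for y
    unfolding sY_def by (rule someI_ex) (use that onto in blast)
  have sX: "sX x \<in> Z \<and> phiX (sX x) = x" if "x \<in> X" for x
    unfolding sX_def by (rule someI_ex) (use that onto in blast)
  show ?thesis
  proof (rule that, unfold_locales)
    show "(phiX \<circ> sY) y \<in> X" if "y \<in> Y" for y using sY[OF that] onto by auto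
    show "(phiY \<circ> sX) x \<in> Y" if "x \<in> X" for x using sX[OF that] onto by auto
    show "vee dX (t - e) (t + e) ((phiX \<circ> sY) y) ((phiX \<circ> sY) y') \<le> dY t y y' + 2 * e"
      if "y \<in> Y" "y' \<in> Y" for t y y'
      using dist[of "sY y" "sY y'" t] sY[OF that(1)] sY[OF that(2)] by simp
    show "vee dY (t - e) (t + e) ((phiY \<circ> sX) x) ((phiY \<circ> sX) x') \<le> dX t x x' + 2 * e"
      if "x \<in> X" "x' \<in> X" for t x x'
      using dist[of "sX x" "sX x'" t] sX[OF that(1)] sX[OF that(2)] by simp
    show "vee dY (t - e) (t + e) y ((phiY \<circ> sX) x) \<le> dX t ((phiX \<circ> sY) y) x + 2 * e"
      if "y \<in> Y" "x \<in> X" for t y x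
      using dist[of "sY y" "sX x" t] sY[OF that(1)] sX[OF that(2)] by simp
  qed (use assms in auto)
qed

lemma hom_rank_rips_tripod_le:
  fixes X :: "'a::linorder set" and Y :: "'b::linorder set"
  assumes DX: "is_DMS X dX" and DY: "is_DMS Y dY"
    and T: "eps_tripod X dX Y dY Z phiX phiY e" and e: "e \<ge> 0"
    and a: "a1 + 2 * e \<le> a2 - 2 * e" "a4 \<le> a1" "a2 \<le> a5" "a3 \<le> a6"
  shows "hom_rank TYPE('f::field)
            (rips Y (vee dY (a1 + 2 * e) (a2 - 2 * e)) (a3 - 2 * e))
            (rips Y (vee dY (a4 - 2 * e) (a5 + 2 * e)) (a6 + 2 * e)) k
       \<le> hom_rank TYPE('f) (rips X (vee dX a1 a2) a3) (rips X (vee dX a4 a5) a6) k"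
proof -
  obtain f g where "tripod_maps X dX Y dY e f g" using eps_tripod_obtain_maps[OF DX DY e T] .
  then interpret tripod_maps X dX Y dY e f g .
  define KY where "KY = rips Y (vee dY (a1 + 2 * e) (a2 - 2 * e)) (a3 - 2 * e)"
  define LY where "LY = rips Y (vee dY (a4 - 2 * e) (a5 + 2 * e)) (a6 + 2 * e)"
  define KX where "KX = rips X (vee dX a1 a2) a3"
  define LX where "LX = rips X (vee dX a4 a5) a6"
  have fK: "f ` \<sigma> \<in> KX" if "\<sigma> \<in> KY" for \<sigma>
    using that unfolding KX_def KY_def by (rule f_image_rips) (use a e in auto)
  have gL: "g ` \<sigma> \<in> LY" if "\<sigma> \<in> LX" for \<sigma>
    using that unfolding LX_def LY_def by (rule g_image_rips) (use a e in auto)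
  have KL: "KX \<subseteq> LX" unfolding KX_def LX_def
    by (rule rips_mono, rule vee_antimono[OF DX]) (use a e in auto)
  have KLY: "KY \<subseteq> LY" unfolding KY_def LY_def
    by (rule rips_mono, rule vee_antimono[OF DY]) (use a e in auto)
  have contig: "\<tau> \<in> LY" if \<sigma>: "\<sigma> \<in> KY" and \<tau>: "\<tau> \<noteq> {}" "\<tau> \<subseteq> \<sigma> \<union> (g \<circ> f) ` \<sigma>" for \<sigma> \<tau>
  proof -
    have "\<sigma> \<in> LY" "g ` f ` \<sigma> \<in> LY" using \<sigma> KLY KL fK gL by blast+
    moreover have "vee dY (a4 - 2 * e) (a5 + 2 * e) y ((g \<circ> f) y') \<le> a6 + 2 * e"
      if "y \<in> \<sigma>" "y' \<in> \<sigma>" for y y'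
      using \<sigma> that unfolding KY_def rips_def comp_apply
      by (intro vee_g_f_le[where lo="a1 + 2 * e" and hi="a2 - 2 * e" and \<delta>="a3 - 2 * e"])
         (use a e in auto)
    ultimately show ?thesis unfolding LY_def
      by (intro rips_subset_Un_image[OF vee_sym[OF DY] _ _ _ \<tau>]) (simp_all add: image_comp)
  qed
  have "hom_rank TYPE('f) KY LY k \<le> hom_rank TYPE('f) KX LX k"
  proof (rule hom_rank_le_factor[OF is_DMS_D(1)[OF DX] is_DMS_D(1)[OF DY] _ _ _ _ _ _ fK gL KL])
    show "f ` Y \<subseteq> X" "g ` X \<subseteq> Y" using f_into g_into by auto
    show "KY \<subseteq> Pow Y" "LY \<subseteq> Pow Y" "KX \<subseteq> Pow X" "LX \<subseteq> Pow X"
      unfolding KY_def LY_def KX_def LX_def rips_def by auto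
  qed (assumption | rule contig)+
  then show ?thesis unfolding KY_def LY_def KX_def LX_def .
qed

section \<open>The rank invariant under shifts\<close>

lemma le6_shift6: "e \<ge> 0 \<Longrightarrow> le6 a (shift6 a e)"
  by (simp add: le6_def shift6_def)

lemma le6_trans: "le6 a b \<Longrightarrow> le6 b c \<Longrightarrow> le6 a c"
  by (simp add: le6_def)

lemma le6_antisym: "le6 a b \<Longrightarrow> le6 b a \<Longrightarrow> a = b"
  by (cases a, cases b) (simp add: le6_def)

lemma not_triv_nonadmissible_if_admissible_below:
  "admissible a \<Longrightarrow> le6 a b \<Longrightarrow> a \<noteq> b \<Longrightarrow> \<not> triv_nonadmissible b"
  unfolding triv_nonadmissible_def by blast

lemma not_triv_nonadmissible_mono:
  assumes "\<not> triv_nonadmissible a" and "le6 a b"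
  shows "\<not> triv_nonadmissible b"
proof -
  obtain c where c: "admissible c" "le6 c a" "c \<noteq> a"
    using assms(1) unfolding triv_nonadmissible_def by blast
  have "c \<noteq> b" using c assms(2) le6_antisym le6_trans by blast
  then show ?thesis using c assms(2) le6_trans not_triv_nonadmissible_if_admissible_below by blast
qed

text \<open>A non-admissible point lying above an admissible one must have an empty time interval
  \<open>c2 < c1\<close> or a negative scale \<open>c3 < 0\<close>, and shifting upwards only makes this worse.\<close>
lemma not_admissible_shift6:
  assumes "\<not> admissible a" "\<not> triv_nonadmissible a" "e \<ge> 0"
  shows "\<not> admissible (shift6 a e)"
proof -
  obtain b where b: "admissible b" "le6 b a"
    using assms(2) unfolding triv_nonadmissible_def by blast
  have "c2 a < c1 a \<or> c3 a < 0"
    using assms(1) b unfolding admissible_def le6_def atLeastatMost_subset_iff by auto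
  then show ?thesis using assms(3) unfolding admissible_def shift6_def by auto
qed

lemma rk_shift6_le:
  assumes DX: "is_DMS X dX" and DY: "is_DMS Y dY"
    and T: "eps_tripod X dX Y dY Z phiX phiY e" and e: "e \<ge> 0"
  shows "rk TYPE('f::field) k Y dY (shift6 a (2 * e)) \<le> rk TYPE('f) k X dX a"
proof (cases "admissible a")
  case a: True
  show ?thesis
  proof (cases "admissible (shift6 a (2 * e))")
    case True
    then have "c1 a + 2 * e \<le> c2 a - 2 * e" by (simp add: admissible_def shift6_def)
    with a True show ?thesis
      using hom_rank_rips_tripod_le[OF DX DY T e, of "c1 a" "c2 a" "c4 a" "c5 a" "c3 a" "c6 a"]
      by (simp add: rk_def admissible_def shift6_def)
  next
    case False
    then have "a \<noteq> shift6 a (2 * e)" using a by metis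
    then have "\<not> triv_nonadmissible (shift6 a (2 * e))"
      using not_triv_nonadmissible_if_admissible_below a le6_shift6 e by simp
    with False show ?thesis by (simp add: rk_def)
  qed
next
  case False
  show ?thesis
  proof (cases "triv_nonadmissible a")
    case nt: False
    have "\<not> triv_nonadmissible (shift6 a (2 * e))"
      using not_triv_nonadmissible_mono[OF nt le6_shift6] e by simp
    with not_admissible_shift6[OF False nt] e show ?thesis by (simp add: rk_def)
  qed (simp add: rk_def False)
qed

theorem theorem4p4:
  fixes X :: "'a::linorder set" and dX :: "real \<Rightarrow> 'a \<Rightarrow> 'a \<Rightarrow> real"
    and Y :: "'b::linorder set" and dY :: "real \<Rightarrow> 'b \<Rightarrow> 'b \<Rightarrow> real"
    and k :: nat
  assumes "is_DMS X dX" and "is_DMS Y dY"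
  shows "interleaving_dist (rk TYPE('f::field) k X dX) (rk TYPE('f) k Y dY)
           \<le> 2 * d_dyn X dX Y dY"
proof -
  let ?F = "rk TYPE('f::field) k X dX" and ?G = "rk TYPE('f) k Y dY"
  define interleavings where "interleavings = {ereal \<epsilon> | \<epsilon>. \<epsilon> \<ge> 0 \<and>
      (\<forall>a. ?F a \<ge> ?G (shift6 a \<epsilon>) \<and> ?G a \<ge> ?F (shift6 a \<epsilon>))}"
  define tripods where "tripods = {ereal \<epsilon> | \<epsilon> (Z :: ('a \<times> 'b) set) phiX phiY.
      \<epsilon> \<ge> 0 \<and> eps_tripod X dX Y dY Z phiX phiY \<epsilon>}"
  have "(*) 2 ` tripods \<subseteq> interleavings"
  proof
    fix y assume "y \<in> (*) 2 ` tripods"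
    then obtain e Z phiX phiY where y: "y = ereal (2 * e)" "e \<ge> 0"
      and T: "eps_tripod X dX Y dY (Z :: ('a \<times> 'b) set) phiX phiY e"
      unfolding tripods_def by auto
    show "y \<in> interleavings" unfolding interleavings_def
      using y rk_shift6_le[OF assms T] rk_shift6_le[OF assms(2,1) eps_tripod_sym[OF T]] by auto
  qed
  then have "Inf interleavings \<le> Inf ((*) 2 ` tripods)" by (rule Inf_superset_mono)
  also have "\<dots> = 2 * Inf tripods"
    using ereal_Inf_cmult[of 2 "\<lambda>x. x \<in> tripods"] by (simp add: Setcompr_eq_image)
  finally show ?thesis unfolding interleaving_dist_def d_dyn_def interleavings_def tripods_def .
qed

end
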